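(* Let $T$ be a $\pi$-increasing tree whose vertex-set $\mathcal{S}$ consists of two or more blocks of $\pi$; let $M$ be its maximum vertex and $m=\max(\mathcal{S}\setminus\pi^M)$ its second maximum vertex. (a) If $T$ is reducible, then $T$ can be written uniquely as $T=\mathrm{spl}(T_1,M;T_2,t)$ where $T_1,T_2$ are $\pi$-increasing trees such that $M$ is a vertex of $T_1$, $t$ is a vertex of $T_2$, and $T_1$ is irreducible. Moreover, if $1$ is a vertex of $T$, then $1$ is a vertex of $T_2$. (b) If $T$ is irreducible, then $T$ can be written uniquely as $T=\mathrm{spl}(T_1,m;T_2,t)$ where $T_1,T_2$ are $\pi$-increasing trees such that $m$ is a vertex of $T_1$, $t$ and $M$ are vertices of $T_2$ with $t<m$, and $T_1$ and $T_2$ are both irreducible.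
   Context: Standing assumptions: $r\ge2$ and $\pi$ is a set partition of $\{1,\dots,r\}$ having $\{1\}$ as a block; its blocks are $\pi_i$ with maxima $\mu_i$; $\pi^x$ denotes the block containing $x$. An unordered increasing tree is a rooted tree on distinct positive integers, sons unordered, each son larger than its father. A $\pi$-increasing tree is an unordered increasing tree $T$ whose vertex-set is a union of blocks of $\pi$ and such that for any two elements $i<j$ of a same block of $\pi$ contained in $V(T)$, $i$ is an ancestor of $j$ in $T$. $v$-decomposition: for a vertex $v$ of $T$ with chain $a_1<\dots<a_\ell=v$ from the root to $v$, removing the chain edges leaves components $T^{(a_j)}$ rooted at $a_j$. Splice: for unordered increasing trees $T_1,T_2$ with disjoint vertex-sets and $v_1\in V(T_1)$, $v_2\in V(T_2)$, $v_1>v_2$, $\mathrm{spl}(T_1,v_1;T_2,v_2)$ is the tree on $V(T_1)\cup V(T_2)$ obtained by merging the root-to-$v_1$ chain of $T_1$ and the root-to-$v_2$ chain of $T_2$ into one increasing chain (ending at $v_1$) and attaching at each chain vertex its component from the $v_1$-decomposition of $T_1$ or the $v_2$-decomposition of $T_2$. $v$-dependence graph $G_v(T)$: directed graph on the blocks of $\pi$ contained in $V(T)$; for each such block $\pi_i$ whose maximum $\mu_i$ is not on the chain $a_1,\dots,a_\ell$, $\mu_i$ is a non-root vertex of a unique $T^{(a_j)}$ and there is an edge (possibly a loop) $\pi_i\to\pi^{a_j}$; no other edges. A $\pi$-increasing tree with maximum vertex $M$ is irreducible if $G_M(T)$ is connected (ignoring directions), reducible otherwise. *)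

theory Defs
  imports Main "HOL-Library.Disjoint_Sets"
begin

text \<open>A rooted unordered tree on positive integers is represented by its vertex set
  and its set of edges (father, son).  Equality of trees is equality of these pairs,
  which is the right notion for unordered (unlabelled-order) trees.\<close>

type_synonym tree = "nat set \<times> (nat \<times> nat) set"

abbreviation verts :: "tree \<Rightarrow> nat set" where "verts T \<equiv> fst T"
abbreviation edges :: "tree \<Rightarrow> (nat \<times> nat) set" where "edges T \<equiv> snd T"

text \<open>Following fathers strictly
  decreases, so this forces a tree rooted at the minimum.\<close>
definition inc_tree :: "tree \<Rightarrow> bool" where
  "inc_tree T \<longleftrightarrow> finite (verts T) \<and> verts T \<noteq> {} \<and> 0 \<notin> verts T
     \<and> edges T \<subseteq> verts T \<times> verts T
     \<and> (\<forall>(a,b)\<in>edges T. a < b)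
     \<and> (\<forall>v\<in>verts T. v \<noteq> Min (verts T) \<longrightarrow> (\<exists>!a. (a,v) \<in> edges T))"

definition std_partition :: "nat \<Rightarrow> nat set set \<Rightarrow> bool" where
  "std_partition r P \<longleftrightarrow> r \<ge> 2 \<and> partition_on {1..r} P \<and> {1} \<in> P"

definition blk :: "nat set set \<Rightarrow> nat \<Rightarrow> nat set" where
  "blk P x = (THE B. B \<in> P \<and> x \<in> B)"

definition blocks_in :: "nat set set \<Rightarrow> nat set \<Rightarrow> nat set set" where
  "blocks_in P S = {B \<in> P. B \<subseteq> S}"

definition pi_inc_tree :: "nat set set \<Rightarrow> tree \<Rightarrow> bool" where
  "pi_inc_tree P T \<longleftrightarrow> inc_tree T
     \<and> verts T = \<Union>(blocks_in P (verts T))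
     \<and> (\<forall>B\<in>blocks_in P (verts T). \<forall>i\<in>B. \<forall>j\<in>B. i < j \<longrightarrow> (i,j) \<in> (edges T)\<^sup>+)"

definition chain :: "tree \<Rightarrow> nat \<Rightarrow> nat set" where
  "chain T v = {a \<in> verts T. (a,v) \<in> (edges T)\<^sup>*}"

definition chain_edges :: "tree \<Rightarrow> nat \<Rightarrow> (nat \<times> nat) set" where
  "chain_edges T v = {(a,b) \<in> edges T. a \<in> chain T v \<and> b \<in> chain T v}"

text \<open>Vertex set of the component $T^{(a)}$ of the v-decomposition (a on the chain).\<close>
definition comp_verts :: "tree \<Rightarrow> nat \<Rightarrow> nat \<Rightarrow> nat set" where
  "comp_verts T v a = {x. (a,x) \<in> (edges T - chain_edges T v)\<^sup>*}"

definition spl :: "tree \<Rightarrow> nat \<Rightarrow> tree \<Rightarrow> nat \<Rightarrow> tree" where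
  "spl T1 v1 T2 v2 =
     (let C = chain T1 v1 \<union> chain T2 v2 in
      (verts T1 \<union> verts T2,
       (edges T1 - chain_edges T1 v1) \<union> (edges T2 - chain_edges T2 v2)
       \<union> {(a,b). a \<in> C \<and> b \<in> C \<and> a < b \<and> \<not>(\<exists>c\<in>C. a < c \<and> c < b)}))"

text \<open>Edges of the v-dependence graph $G_v(T)$ (nodes: blocks_in P (verts T)).\<close>
definition dep_edges :: "nat set set \<Rightarrow> tree \<Rightarrow> nat \<Rightarrow> (nat set \<times> nat set) set" where
  "dep_edges P T v =
     {(B, blk P a) | B a. B \<in> blocks_in P (verts T) \<and> Max B \<notin> chain T v
        \<and> a \<in> chain T v \<and> Max B \<in> comp_verts T v a}"

definition dep_connected :: "nat set set \<Rightarrow> tree \<Rightarrow> nat \<Rightarrow> bool" where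
  "dep_connected P T v \<longleftrightarrow>
     (\<forall>B1\<in>blocks_in P (verts T). \<forall>B2\<in>blocks_in P (verts T).
        (B1,B2) \<in> (dep_edges P T v \<union> (dep_edges P T v)\<inverse>)\<^sup>*)"

definition irreducible_tree :: "nat set set \<Rightarrow> tree \<Rightarrow> bool" where
  "irreducible_tree P T \<longleftrightarrow> pi_inc_tree P T \<and> dep_connected P T (Max (verts T))"

definition reducible_tree :: "nat set set \<Rightarrow> tree \<Rightarrow> bool" where
  "reducible_tree P T \<longleftrightarrow> pi_inc_tree P T \<and> \<not> dep_connected P T (Max (verts T))"

end

theory Submission
  imports Defs
begin

text \<open>Cutting T along the chain to a vertex v into the union of the blocks connected to
  $\pi^v$ in $G_v(T)$ and the rest inverts the splice: for a splice
  $\mathrm{spl}(T_1,v;T_2,t)$ of $\pi$-increasing trees on disjoint vertex sets one has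
  $G_v(T) = G_v(T_1) \cup G_t(T_2)$, so if $G_v(T_1)$ is connected, the vertex set of $T_1$ is
  exactly that union of blocks, which determines $T_1$, $T_2$ and t.
  For (a) take v = M; reducibility says the component of $\pi^M$ misses a block, and the
  blocks anchored at the root 1 form a union of components not containing $\pi^M$.
  For (b) take v = m and let c be the branch point of the chains to m and M. In $G_m(T)$ the
  block $\pi^M$ points to $\pi^c$, which carries a loop, so $\pi^M$ is not connected to the
  sink $\pi^m$; and collapsing the component of $\pi^m$ onto $\pi^c$ maps the connected
  graph $G_M(T)$ onto $G_M(T_2)$.\<close>

section \<open>Symmetric closures and functional relations\<close>

abbreviation symcl :: "('a \<times> 'a) set \<Rightarrow> ('a \<times> 'a) set" where
  "symcl R \<equiv> R \<union> R\<inverse>"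

lemma rtrancl_symcl_sym: "(x,y) \<in> (symcl R)\<^sup>* \<Longrightarrow> (y,x) \<in> (symcl R)\<^sup>*"
  using sym_rtrancl[OF sym_Un_converse] by (rule symD)

lemma rtrancl_symcl_closed:
  assumes "(x,y) \<in> (symcl R)\<^sup>*" and "\<And>a b. (a,b) \<in> R \<Longrightarrow> a \<in> X \<longleftrightarrow> b \<in> X"
  shows "x \<in> X \<longleftrightarrow> y \<in> X"
  using assms(1) by (induction rule: rtrancl_induct) (use assms(2) in blast)+

lemma rtrancl_symcl_restrict:
  assumes "(x,y) \<in> (symcl R)\<^sup>*" and "x \<in> X"
    and "\<And>a b. (a,b) \<in> R \<Longrightarrow> a \<in> X \<or> b \<in> X \<Longrightarrow> (a,b) \<in> R' \<and> a \<in> X \<and> b \<in> X"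
  shows "(x,y) \<in> (symcl R')\<^sup>* \<and> y \<in> X"
  using assms(1)
proof (induction rule: rtrancl_induct)
  case (step y z)
  then have "(y,z) \<in> symcl R'" "z \<in> X" using assms(3) by blast+
  then show ?case using step.IH by (meson rtrancl.rtrancl_into_rtrancl)
qed (use assms(2) in simp)

lemma rtrancl_symcl_map:
  assumes "(x,y) \<in> (symcl R)\<^sup>*" and "\<And>a b. (a,b) \<in> R \<Longrightarrow> f a = f b \<or> (f a, f b) \<in> R'"
  shows "(f x, f y) \<in> (symcl R')\<^sup>*"
  using assms(1)
proof (induction rule: rtrancl_induct)
  case (step y z)
  then have "f y = f z \<or> (f y, f z) \<in> symcl R'" using assms(2)[of y z] assms(2)[of z y] by auto
  then show ?case using step.IH by (metis rtrancl.rtrancl_into_rtrancl)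
qed simp

lemma single_valued_rtrancl_sink_iff:
  assumes "single_valued R" and "\<And>b. (z,b) \<notin> R" and "(a,b) \<in> R"
  shows "(a,z) \<in> R\<^sup>* \<longleftrightarrow> (b,z) \<in> R\<^sup>*"
proof
  assume "(a,z) \<in> R\<^sup>*"
  then show "(b,z) \<in> R\<^sup>*"
  proof (cases rule: converse_rtranclE)
    case (step c)
    then show ?thesis using single_valuedD[OF assms(1,3)] by simp
  qed (use assms(2,3) in auto)
qed (use assms(3) in \<open>meson converse_rtrancl_into_rtrancl\<close>)

lemma single_valued_rtrancl_sink_symcl:
  assumes "single_valued R" and "\<And>b. (z,b) \<notin> R" and "(x,z) \<in> (symcl R)\<^sup>*"
  shows "(x,z) \<in> R\<^sup>*"
  using rtrancl_symcl_closed[OF assms(3), of "{a. (a,z) \<in> R\<^sup>*}"]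
    single_valued_rtrancl_sink_iff[OF assms(1,2)] by simp

lemma single_valued_rtrancl_loop:
  assumes "single_valued R" and "(x,z) \<in> R\<^sup>*" and "(x,x) \<in> R"
  shows "x = z"
  using assms(2,3)
proof (induction rule: converse_rtrancl_induct)
  case (step y w)
  then show ?case using single_valuedD[OF assms(1)] by metis
qed simp

lemma ex1_tripleI:
  assumes "\<Phi> a b c" and "\<And>x y z. \<Phi> x y z \<Longrightarrow> (x,y,z) = (a,b,c)"
  shows "\<exists>!(x,y,z). \<Phi> x y z"
proof (rule ex1I[of _ "(a,b,c)"])
  show "case (a,b,c) of (x,y,z) \<Rightarrow> \<Phi> x y z" using assms(1) by simp
  fix p assume "case p of (x,y,z) \<Rightarrow> \<Phi> x y z"
  then show "p = (a,b,c)" using assms(2) by (cases p) auto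
qed

section \<open>Consecutive elements of a finite set\<close>

definition consecutive :: "'a::linorder set \<Rightarrow> ('a \<times> 'a) set" where
  "consecutive C = {(a,b). a \<in> C \<and> b \<in> C \<and> a < b \<and> \<not>(\<exists>c\<in>C. a < c \<and> c < b)}"

lemma consecutive_iff:
  "(a,b) \<in> consecutive C \<longleftrightarrow> a \<in> C \<and> b \<in> C \<and> a < b \<and> \<not>(\<exists>c\<in>C. a < c \<and> c < b)"
  unfolding consecutive_def by simp

lemma consecutive_subset: "consecutive C \<subseteq> C \<times> C"
  unfolding consecutive_def by auto

lemma consecutive_predI:
  assumes "finite C" "b \<in> C" "a \<in> C" "a < b"
  shows "(Max {c \<in> C. c < b}, b) \<in> consecutive C"
proof -
  let ?S = "{c \<in> C. c < b}"
  have fin: "finite ?S" using assms(1) by simp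
  have "Max ?S \<in> ?S" using assms by (intro Max_in) auto
  moreover have "\<not> (Max ?S < c \<and> c < b)" if "c \<in> C" for c
    using Max_ge[OF fin, of c] that by auto
  ultimately show ?thesis using assms(2) unfolding consecutive_def by blast
qed

lemma consecutive_unique: "(a,b) \<in> consecutive C \<Longrightarrow> (a',b) \<in> consecutive C \<Longrightarrow> a = a'"
  unfolding consecutive_def using linorder_neqE by blast

lemma consecutive_atMost:
  "(p,y) \<in> consecutive C \<Longrightarrow> C \<inter> {..y} = insert y (C \<inter> {..p})"
  unfolding consecutive_def by auto

lemma spl_eq: "spl T1 v1 T2 v2 = (verts T1 \<union> verts T2,
       (edges T1 - chain_edges T1 v1) \<union> (edges T2 - chain_edges T2 v2)
       \<union> consecutive (chain T1 v1 \<union> chain T2 v2))"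
  unfolding spl_def consecutive_def Let_def by simp

section \<open>Increasing trees, chains and anchors\<close>

definition parent :: "tree \<Rightarrow> nat \<Rightarrow> nat" where
  "parent T y = (THE a. (a,y) \<in> edges T)"

definition ancestors :: "tree \<Rightarrow> nat \<Rightarrow> nat set" where
  "ancestors T y = {x. (x,y) \<in> (edges T)\<^sup>*}"

text \<open>The chain vertex a with x in the component $T^{(a)}$ of the v-decomposition.\<close>

definition anchor :: "tree \<Rightarrow> nat \<Rightarrow> nat \<Rightarrow> nat" where
  "anchor T v x = Max (chain T v \<inter> ancestors T x)"

locale increasing_tree =
  fixes T :: tree
  assumes inc_tree: "inc_tree T"
begin

abbreviation "V \<equiv> verts T"
abbreviation "E \<equiv> edges T"

definition root :: nat where "root = Min V"

lemma finite_V: "finite V" and V_nonempty: "V \<noteq> {}" and zero_notin_V: "0 \<notin> V"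
  and edge_in_V: "(a,b) \<in> E \<Longrightarrow> a \<in> V \<and> b \<in> V"
  and edge_less: "(a,b) \<in> E \<Longrightarrow> a < b"
  and unique_parent: "v \<in> V \<Longrightarrow> v \<noteq> root \<Longrightarrow> \<exists>!a. (a,v) \<in> E"
  using inc_tree unfolding inc_tree_def root_def by auto

lemma root_in_V: "root \<in> V"
  using finite_V V_nonempty root_def by simp

lemma root_le: "x \<in> V \<Longrightarrow> root \<le> x"
  using finite_V root_def by simp

lemma no_edge_to_root: "(a,root) \<notin> E"
  using edge_less edge_in_V root_le by fastforce

lemma parent_eqI: assumes "(a,y) \<in> E" shows "parent T y = a"
proof -
  have "y \<in> V" "y \<noteq> root" using assms edge_in_V no_edge_to_root by auto
  then have "\<exists>!a. (a,y) \<in> E" by (rule unique_parent)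
  then show ?thesis using assms unfolding parent_def by (rule the1_equality)
qed

lemma parent_edge: assumes "y \<in> V" "y \<noteq> root" shows "(parent T y, y) \<in> E"
  using unique_parent[OF assms] parent_eqI by blast

lemma parent_less: "y \<in> V \<Longrightarrow> y \<noteq> root \<Longrightarrow> parent T y < y"
  using parent_edge edge_less by blast

lemma parent_in_V: "y \<in> V \<Longrightarrow> y \<noteq> root \<Longrightarrow> parent T y \<in> V"
  using parent_edge edge_in_V by blast

lemma rtrancl_le: "(x,y) \<in> E\<^sup>* \<Longrightarrow> x \<le> y"
  by (induction rule: rtrancl_induct) (auto dest: edge_less)

lemma rtrancl_V_fst: "(x,y) \<in> E\<^sup>* \<Longrightarrow> y \<in> V \<Longrightarrow> x \<in> V"
  by (induction rule: rtrancl_induct) (auto dest: edge_in_V)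

lemma rtrancl_V_snd: "(x,y) \<in> E\<^sup>* \<Longrightarrow> x \<in> V \<Longrightarrow> y \<in> V"
  by (induction rule: rtrancl_induct) (auto dest: edge_in_V)

lemma rtrancl_parent_iff:
  "(x,y) \<in> E\<^sup>* \<longleftrightarrow> x = y \<or> (y \<in> V \<and> y \<noteq> root \<and> (x, parent T y) \<in> E\<^sup>*)"
proof
  assume "(x,y) \<in> E\<^sup>*"
  then show "x = y \<or> (y \<in> V \<and> y \<noteq> root \<and> (x, parent T y) \<in> E\<^sup>*)"
  proof (cases rule: rtranclE)
    case (step z)
    then show ?thesis using parent_eqI[OF step(2)] edge_in_V[OF step(2)] no_edge_to_root by auto
  qed simp
qed (use parent_edge in \<open>auto intro: rtrancl_into_rtrancl\<close>)

lemma root_rtrancl: "y \<in> V \<Longrightarrow> (root, y) \<in> E\<^sup>*"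
proof (induction y rule: less_induct)
  case (less y)
  show ?case
  proof (cases "y = root")
    case False
    then have "(root, parent T y) \<in> E\<^sup>*" using less parent_less parent_in_V by blast
    then show ?thesis using parent_edge[OF less.prems False] by simp
  qed simp
qed

lemma rtrancl_common_le:
  "(a,y) \<in> E\<^sup>* \<Longrightarrow> (b,y) \<in> E\<^sup>* \<Longrightarrow> a \<le> b \<Longrightarrow> (a,b) \<in> E\<^sup>*"
proof (induction y arbitrary: a b rule: less_induct)
  case (less y)
  show ?case
  proof (cases "b = y")
    case False
    with less.prems(2) have b: "y \<in> V" "y \<noteq> root" "(b, parent T y) \<in> E\<^sup>*"
      using rtrancl_parent_iff[of b y] by auto
    have "a \<noteq> y" using less.prems rtrancl_le False by (meson le_antisym)
    then have "(a, parent T y) \<in> E\<^sup>*" using less.prems(1) rtrancl_parent_iff[of a y] by auto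
    then show ?thesis using less.IH[of "parent T y"] b less.prems(3) parent_less by blast
  qed (use less in simp)
qed

lemma rtrancl_common: "(a,y) \<in> E\<^sup>* \<Longrightarrow> (b,y) \<in> E\<^sup>* \<Longrightarrow> (a,b) \<in> E\<^sup>* \<or> (b,a) \<in> E\<^sup>*"
  using rtrancl_common_le[of a y b] rtrancl_common_le[of b y a] by (cases "a \<le> b") auto

lemma ancestors_parent:
  assumes "y \<in> V" "y \<noteq> root" shows "ancestors T y = insert y (ancestors T (parent T y))"
  unfolding ancestors_def using rtrancl_parent_iff[of _ y] assms by auto

lemma ancestors_root: "ancestors T root = {root}"
  unfolding ancestors_def using rtrancl_le rtrancl_V_fst root_le root_in_V by (auto intro: antisym)

lemma chain_eq_ancestors: "v \<in> V \<Longrightarrow> chain T v = ancestors T v"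
  unfolding chain_def ancestors_def using rtrancl_V_fst by auto

lemma chain_memD: "a \<in> chain T v \<Longrightarrow> v \<in> V"
  unfolding chain_def using rtrancl_V_snd by auto

lemma chain_subset_V: "chain T v \<subseteq> V"
  unfolding chain_def by auto

lemma finite_chain: "finite (chain T v)"
  using chain_subset_V finite_V finite_subset by blast

lemma chain_rtrancl_closed: "a \<in> chain T v \<Longrightarrow> (b,a) \<in> E\<^sup>* \<Longrightarrow> b \<in> chain T v"
  unfolding chain_def using rtrancl_V_fst by (auto intro: rtrancl_trans)

lemma chain_rtrancl: "a \<in> chain T v \<Longrightarrow> b \<in> chain T v \<Longrightarrow> a \<le> b \<Longrightarrow> (a,b) \<in> E\<^sup>*"
  unfolding chain_def using rtrancl_common_le[of a v b] by auto

lemma root_in_chain: "v \<in> V \<Longrightarrow> root \<in> chain T v"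
  unfolding chain_def using root_rtrancl root_in_V by auto

lemma self_in_chain: "v \<in> V \<Longrightarrow> v \<in> chain T v"
  unfolding chain_def by auto

lemma chain_le: "a \<in> chain T v \<Longrightarrow> a \<le> v"
  unfolding chain_def using rtrancl_le by auto

lemma ancestors_chain: assumes "a \<in> chain T v" shows "ancestors T a = chain T v \<inter> {..a}"
  unfolding ancestors_def
  using chain_rtrancl_closed[OF assms] chain_rtrancl[OF _ assms] rtrancl_le[of _ a] by auto

lemma
  assumes "v \<in> V" "x \<in> V"
  shows anchor_in_chain: "anchor T v x \<in> chain T v"
    and anchor_rtrancl: "(anchor T v x, x) \<in> E\<^sup>*"
    and anchor_greatest: "\<And>z. z \<in> chain T v \<Longrightarrow> (z,x) \<in> E\<^sup>* \<Longrightarrow> z \<le> anchor T v x"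
proof -
  let ?S = "chain T v \<inter> ancestors T x"
  have "root \<in> ?S" using root_in_chain root_rtrancl assms unfolding ancestors_def by auto
  moreover have fin: "finite ?S" using finite_chain by simp
  ultimately have "Max ?S \<in> ?S" by (intro Max_in) auto
  moreover have "z \<le> Max ?S" if "z \<in> ?S" for z using fin that by simp
  ultimately show "anchor T v x \<in> chain T v" "(anchor T v x, x) \<in> E\<^sup>*"
    "\<And>z. z \<in> chain T v \<Longrightarrow> (z,x) \<in> E\<^sup>* \<Longrightarrow> z \<le> anchor T v x"
    unfolding anchor_def ancestors_def by auto
qed

lemma anchor_chain: assumes "x \<in> chain T v" shows "anchor T v x = x"
proof -
  have "v \<in> V" "x \<in> V" using assms chain_memD chain_subset_V by auto
  then have "x \<le> anchor T v x" "anchor T v x \<le> x"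
    using anchor_greatest[of v x x] anchor_rtrancl[of v x] rtrancl_le assms by auto
  then show ?thesis by simp
qed

lemma anchor_descendant:
  assumes "v \<in> V" "(x,y) \<in> E\<^sup>*" "x \<notin> chain T v"
  shows "y \<notin> chain T v" "anchor T v y = anchor T v x"
proof -
  show "y \<notin> chain T v" using assms chain_rtrancl_closed by blast
  have "chain T v \<inter> ancestors T y = chain T v \<inter> ancestors T x"
  proof (intro set_eqI iffI)
    fix z assume z: "z \<in> chain T v \<inter> ancestors T y"
    then have "(z,x) \<in> E\<^sup>* \<or> (x,z) \<in> E\<^sup>*"
      using rtrancl_common assms(2) unfolding ancestors_def by blast
    moreover have "(x,z) \<notin> E\<^sup>*" using z chain_rtrancl_closed assms(3) by blast
    ultimately show "z \<in> chain T v \<inter> ancestors T x" using z unfolding ancestors_def by auto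
  qed (use assms(2) in \<open>auto simp: ancestors_def\<close>)
  then show "anchor T v y = anchor T v x" unfolding anchor_def by simp
qed

lemma anchor_parent:
  assumes "v \<in> V" "x \<in> V" "x \<notin> chain T v"
  shows "anchor T v x = (if parent T x \<in> chain T v then parent T x else anchor T v (parent T x))"
proof -
  have "x \<noteq> root" using root_in_chain assms by auto
  then have "anchor T v x = anchor T v (parent T x)"
    using ancestors_parent[OF assms(2)] assms(3) unfolding anchor_def by auto
  then show ?thesis using anchor_chain by simp
qed

lemma chain_edges_eq: "chain_edges T v = {(a,b) \<in> E. b \<in> chain T v}"
  unfolding chain_edges_def using chain_rtrancl_closed by blast

lemma comp_verts_anchor:
  assumes "v \<in> V" "a \<in> chain T v" "(a,x) \<in> (E - chain_edges T v)\<^sup>*"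
  shows "x = a \<or> (x \<in> V \<and> x \<notin> chain T v \<and> anchor T v x = a)"
  using assms(3)
proof (induction rule: rtrancl_induct)
  case (step y z)
  then have yz: "(y,z) \<in> E" "z \<notin> chain T v" using chain_edges_eq by auto
  then have "z \<in> V" using edge_in_V by auto
  then show ?case
    using step.IH assms(2) yz anchor_parent[OF assms(1) _ yz(2)] parent_eqI[OF yz(1)] by auto
qed simp

lemma anchor_comp_verts:
  assumes "v \<in> V" "a \<in> chain T v"
  shows "x \<in> V \<Longrightarrow> x \<notin> chain T v \<Longrightarrow> anchor T v x = a \<Longrightarrow> (a,x) \<in> (E - chain_edges T v)\<^sup>*"
proof (induction x rule: less_induct)
  case (less x)
  have xr: "x \<noteq> root" using root_in_chain[OF assms(1)] less.prems by auto
  have e: "(parent T x, x) \<in> E - chain_edges T v"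
    using parent_edge[OF less.prems(1) xr] less.prems(2) chain_edges_eq by auto
  show ?case
  proof (cases "parent T x \<in> chain T v")
    case True
    then have "parent T x = a" using anchor_parent[OF assms(1) less.prems(1,2)] less.prems(3) by simp
    then show ?thesis using e by auto
  next
    case False
    then have "(a, parent T x) \<in> (E - chain_edges T v)\<^sup>*"
      using less.IH[of "parent T x"] anchor_parent[OF assms(1) less.prems(1,2)] less.prems(3)
        parent_less[OF less.prems(1) xr] parent_in_V[OF less.prems(1) xr] by simp
    then show ?thesis using e by (meson rtrancl.rtrancl_into_rtrancl)
  qed
qed

lemma comp_verts_iff:
  assumes "v \<in> V" "a \<in> chain T v" "x \<notin> chain T v"
  shows "x \<in> comp_verts T v a \<longleftrightarrow> x \<in> V \<and> anchor T v x = a"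
  using comp_verts_anchor[OF assms(1,2), of x] anchor_comp_verts[OF assms(1,2), of x] assms(2,3)
  unfolding comp_verts_def by auto

lemma edges_into_chain: assumes "v \<in> V"
  shows "{(a,b) \<in> E. b \<in> chain T v} = consecutive (chain T v)"
proof (intro set_eqI iffI; clarify)
  fix a b assume ab: "(a,b) \<in> E" "b \<in> chain T v"
  have a: "a \<in> chain T v" using chain_rtrancl_closed[OF ab(2), of a] ab(1) by blast
  have below: "c \<le> a" if "c \<in> chain T v" "c < b" for c
  proof -
    have "(c,b) \<in> E\<^sup>*" using chain_rtrancl[OF that(1) ab(2)] that by auto
    then have "(c,a) \<in> E\<^sup>*" using rtrancl_parent_iff[of c b] that parent_eqI[OF ab(1)] by auto
    then show ?thesis by (rule rtrancl_le)
  qed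
  then have "\<not> (a < c \<and> c < b)" if "c \<in> chain T v" for c
    using below[OF that] by auto
  then show "(a,b) \<in> consecutive (chain T v)"
    unfolding consecutive_iff using a ab(2) edge_less[OF ab(1)] by blast
next
  fix a b assume ab: "(a,b) \<in> consecutive (chain T v)"
  then have ch: "a \<in> chain T v" "b \<in> chain T v" "a < b" unfolding consecutive_def by auto
  moreover have "a \<in> V" using ch(1) chain_subset_V by blast
  ultimately have b: "b \<in> V" "b \<noteq> root" using chain_subset_V root_le[of a] by auto
  have p: "parent T b \<in> chain T v"
    using chain_rtrancl_closed[OF ch(2), of "parent T b"] parent_edge[OF b] by auto
  have "(a, parent T b) \<in> E\<^sup>*"
    using chain_rtrancl[OF ch(1,2)] ch(3) rtrancl_parent_iff[of a b] by auto
  then have "a \<le> parent T b" by (rule rtrancl_le)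
  moreover have "\<not> (a < parent T b)" using ab p parent_less[OF b] unfolding consecutive_iff by blast
  ultimately have "a = parent T b" by simp
  then show "(a,b) \<in> E \<and> b \<in> chain T v" using parent_edge[OF b] ch by auto
qed


lemma edges_split: assumes "v \<in> V"
  shows "E = {(a,b) \<in> E. b \<notin> chain T v} \<union> consecutive (chain T v)"
proof -
  have "E = {(a,b) \<in> E. b \<notin> chain T v} \<union> {(a,b) \<in> E. b \<in> chain T v}" by blast
  then show ?thesis using edges_into_chain[OF assms] by simp
qed

lemma
  assumes u: "u \<in> V" and w: "w \<in> V"
  shows anchor_in_chains: "anchor T u w \<in> chain T u \<inter> chain T w"
    and anchor_greatest_common: "z \<in> chain T u \<Longrightarrow> z \<in> chain T w \<Longrightarrow> z \<le> anchor T u w"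
proof -
  show "anchor T u w \<in> chain T u \<inter> chain T w"
    using anchor_in_chain[OF u w] anchor_rtrancl[OF u w] chain_rtrancl_closed[OF self_in_chain[OF w]]
    by blast
  show "z \<in> chain T u \<Longrightarrow> z \<in> chain T w \<Longrightarrow> z \<le> anchor T u w"
    using anchor_greatest[OF u w] unfolding chain_def by blast
qed

lemma chain_below_anchor:
  assumes u: "u \<in> V" and w: "w \<in> V" and d: "d \<in> chain T u \<union> chain T w" "d \<le> anchor T u w"
  shows "d \<in> chain T u \<inter> chain T w"
  using d anchor_in_chains[OF u w] chain_rtrancl chain_rtrancl_closed by blast

lemma anchor_off_branch:
  assumes u: "u \<in> V" and w: "w \<in> V" and x: "x \<in> V" "x \<notin> chain T w"
    and nb: "(anchor T u w, x) \<notin> E\<^sup>*"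
  shows "x \<notin> chain T u" "anchor T u x = anchor T w x"
proof -
  let ?c = "anchor T u w"
  have "\<not> ?c \<le> d" if "d \<in> chain T u \<union> chain T w" "d \<in> ancestors T x" for d
  proof
    assume "?c \<le> d"
    then have "(?c, d) \<in> E\<^sup>*" using that(1) anchor_in_chains[OF u w] chain_rtrancl by blast
    then show False using nb that(2) unfolding ancestors_def by (meson mem_Collect_eq rtrancl_trans)
  qed
  then have "d \<in> chain T u \<inter> chain T w" if "d \<in> chain T u \<union> chain T w" "d \<in> ancestors T x" for d
    using chain_below_anchor[OF u w] that by fastforce
  then have eq: "chain T u \<inter> ancestors T x = chain T w \<inter> ancestors T x" by blast
  then show "anchor T u x = anchor T w x" unfolding anchor_def by simp
  show "x \<notin> chain T u" using eq x(2) unfolding ancestors_def by blast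
qed

lemma anchor_past_branch:
  assumes u: "u \<in> V" and w: "w \<in> V" and x: "x \<in> V" "(anchor T u w, x) \<in> E\<^sup>*"
    and ne: "anchor T w x \<noteq> anchor T u w"
  shows "x \<notin> chain T u" "anchor T u x = anchor T u w"
proof -
  let ?c = "anchor T u w" and ?a = "anchor T w x"
  have a: "?a \<in> chain T w" "(?a, x) \<in> E\<^sup>*" using anchor_in_chain[OF w x(1)] anchor_rtrancl[OF w x(1)] .
  have "?c \<le> ?a" using anchor_greatest[OF w x(1)] anchor_in_chains[OF u w] x(2) by blast
  then have "?a \<notin> chain T u" using ne anchor_greatest_common[OF u w _ a(1)] by fastforce
  then have below: "d \<le> ?c" if "d \<in> chain T u" "(d,x) \<in> E\<^sup>*" for d
    using rtrancl_common[OF that(2) a(2)] chain_rtrancl_closed[OF a(1)] chain_rtrancl_closed[OF that(1)]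
      anchor_greatest_common[OF u w that(1)] by blast
  have "?c \<le> anchor T u x" using anchor_greatest[OF u x(1)] anchor_in_chains[OF u w] x(2) by blast
  moreover have "anchor T u x \<le> ?c"
    using below[OF anchor_in_chain[OF u x(1)] anchor_rtrancl[OF u x(1)]] .
  ultimately show "anchor T u x = ?c" by simp
  show "x \<notin> chain T u" using chain_rtrancl_closed a(2) \<open>?a \<notin> chain T u\<close> by blast
qed

end

section \<open>Restriction along a chain\<close>

text \<open>Inverse of the splice: the vertices W keep their own edges off the chain to v,
  and the chain to v is cut down to its vertices in W.\<close>

definition restrict_tree :: "tree \<Rightarrow> nat \<Rightarrow> nat set \<Rightarrow> tree" where
  "restrict_tree T v W = (W, {(a,b) \<in> edges T. b \<in> W - chain T v} \<union> consecutive (chain T v \<inter> W))"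

lemma restrict_tree_verts: "verts (restrict_tree T v W) = W"
  unfolding restrict_tree_def by simp

lemma restrict_tree_edges:
  "edges (restrict_tree T v W) = {(a,b) \<in> edges T. b \<in> W - chain T v} \<union> consecutive (chain T v \<inter> W)"
  unfolding restrict_tree_def by simp

context increasing_tree
begin

definition parent_closed :: "nat \<Rightarrow> nat set \<Rightarrow> bool" where
  "parent_closed v W \<longleftrightarrow> W \<subseteq> V \<and> W \<noteq> {} \<and> (\<forall>x\<in>W. x \<notin> chain T v \<longrightarrow> parent T x \<in> W)"

lemma parent_closed_finite: "parent_closed v W \<Longrightarrow> finite W"
  unfolding parent_closed_def using finite_V finite_subset by blast

lemma parent_closed_Min_in_chain:
  assumes v: "v \<in> V" and cl: "parent_closed v W"
  shows "Min W \<in> chain T v \<inter> W"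
proof -
  have W: "W \<subseteq> V" "W \<noteq> {}" "finite W"
    using cl parent_closed_finite unfolding parent_closed_def by auto
  then have mW: "Min W \<in> W" by simp
  moreover have "Min W \<in> chain T v"
  proof (rule ccontr)
    assume nC: "Min W \<notin> chain T v"
    then have "Min W \<noteq> root" using root_in_chain[OF v] by auto
    moreover have "parent T (Min W) \<in> W" using cl nC mW unfolding parent_closed_def by auto
    moreover have "Min W \<in> V" using mW W(1) by blast
    ultimately have "parent T (Min W) < Min W" "Min W \<le> parent T (Min W)"
      using parent_less[of "Min W"] W(3) by simp_all
    then show False by simp
  qed
  ultimately show ?thesis by simp
qed

lemma restrict_tree_in_edge:
  assumes v: "v \<in> V" and cl: "parent_closed v W" and y: "y \<in> W" "y \<noteq> Min W"
  shows "(a,y) \<in> edges (restrict_tree T v W) \<longleftrightarrow>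
    a = (if y \<in> chain T v then Max {c \<in> chain T v \<inter> W. c < y} else parent T y)"
proof (cases "y \<in> chain T v")
  case True
  let ?C = "chain T v \<inter> W"
  have mn: "Min W \<in> ?C" using parent_closed_Min_in_chain[OF v cl] .
  have "Min W < y" using y parent_closed_finite[OF cl] by (simp add: order.not_eq_order_implies_strict)
  then have "(Max {c \<in> ?C. c < y}, y) \<in> consecutive ?C"
    using consecutive_predI[OF _ _ mn] finite_chain True y(1) by simp
  then show ?thesis
    using True consecutive_unique[of a y ?C] unfolding restrict_tree_edges by auto
next
  case False
  then have "y \<noteq> root" using root_in_chain[OF v] by auto
  then have "(parent T y, y) \<in> E" using parent_edge y cl unfolding parent_closed_def by blast
  then show ?thesis
    using False y(1) parent_eqI[of a y] consecutive_subset unfolding restrict_tree_edges by auto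
qed

lemma inc_tree_restrict:
  assumes v: "v \<in> V" and cl: "parent_closed v W"
  shows "inc_tree (restrict_tree T v W)"
proof -
  have W: "W \<subseteq> V" "W \<noteq> {}" "finite W"
    using cl parent_closed_finite unfolding parent_closed_def by auto
  have "edges (restrict_tree T v W) \<subseteq> W \<times> W"
    using cl parent_eqI consecutive_subset unfolding restrict_tree_edges parent_closed_def by blast
  moreover have "\<forall>(a,b)\<in>edges (restrict_tree T v W). a < b"
    using edge_less unfolding restrict_tree_edges consecutive_def by auto
  moreover have "\<forall>y\<in>W. y \<noteq> Min W \<longrightarrow> (\<exists>!a. (a,y) \<in> edges (restrict_tree T v W))"
    using restrict_tree_in_edge[OF v cl] by simp
  ultimately show ?thesis
    using W zero_notin_V unfolding inc_tree_def restrict_tree_verts by blast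
qed

lemma ancestors_restrict:
  assumes v: "v \<in> V" and cl: "parent_closed v W"
  shows "y \<in> W \<Longrightarrow> ancestors (restrict_tree T v W) y = ancestors T y \<inter> W"
proof (induction y rule: less_induct)
  case (less y)
  interpret R: increasing_tree "restrict_tree T v W" using inc_tree_restrict[OF v cl] by unfold_locales
  have W: "W \<subseteq> V" "finite W" using cl parent_closed_finite unfolding parent_closed_def by auto
  have Rroot: "R.root = Min W" unfolding R.root_def restrict_tree_verts ..
  have yV: "y \<in> V" using less W by auto
  show ?case
  proof (cases "y = Min W")
    case True
    then have "ancestors T y \<inter> W = {y}"
      using less W rtrancl_le unfolding ancestors_def by (auto intro: antisym)
    then show ?thesis using R.ancestors_root Rroot True by simp
  next
    case False
    let ?p = "parent (restrict_tree T v W) y"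
    have y: "y \<in> verts (restrict_tree T v W)" "y \<noteq> R.root" using less False Rroot restrict_tree_verts by auto
    then have rec: "ancestors (restrict_tree T v W) y = insert y (ancestors (restrict_tree T v W) ?p)"
      by (rule R.ancestors_parent)
    have p: "?p < y" "?p \<in> W" using R.parent_less[OF y] R.parent_in_V[OF y] restrict_tree_verts by auto
    have IH: "ancestors (restrict_tree T v W) ?p = ancestors T ?p \<inter> W" using less.IH[OF p] .
    show ?thesis
    proof (cases "y \<in> chain T v")
      case False
      then have "?p = parent T y"
        using restrict_tree_in_edge[OF v cl less.prems \<open>y \<noteq> Min W\<close>] R.parent_edge[OF y] by simp
      then show ?thesis
        using rec IH ancestors_parent[OF yV] root_in_chain[OF v] False less.prems by auto
    next
      case True
      have "(?p, y) \<in> edges (restrict_tree T v W)" using R.parent_edge[OF y] .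
      then have "(?p, y) \<in> consecutive (chain T v \<inter> W)"
        using True unfolding restrict_tree_edges by auto
      then have "chain T v \<inter> W \<inter> {..y} = insert y (chain T v \<inter> W \<inter> {..?p})"
        by (rule consecutive_atMost)
      moreover have "?p \<in> chain T v"
        using \<open>(?p, y) \<in> consecutive (chain T v \<inter> W)\<close> unfolding consecutive_def by auto
      ultimately show ?thesis
        using rec IH ancestors_chain[OF True] ancestors_chain[of ?p v] by (simp add: Int_ac)
    qed
  qed
qed

lemma
  assumes v: "v \<in> V" and S: "increasing_tree S" and w: "w \<in> verts S"
    and chain_S: "chain S w = chain T v \<inter> verts S"
    and agree: "\<And>a b. b \<in> verts S - chain S w \<Longrightarrow> (a,b) \<in> edges S \<longleftrightarrow> (a,b) \<in> E"
  shows anchor_agree: "x \<in> verts S \<Longrightarrow> x \<notin> chain S w \<Longrightarrow> anchor T v x = anchor S w x"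
    and restrict_agree: "S = restrict_tree T v (verts S)"
proof -
  interpret S: increasing_tree S by (fact S)
  show "x \<in> verts S \<Longrightarrow> x \<notin> chain S w \<Longrightarrow> anchor T v x = anchor S w x"
  proof (induction x rule: less_induct)
    case (less x)
    have "x \<noteq> S.root" using S.root_in_chain[OF w] less by auto
    then have p: "(parent S x, x) \<in> edges S" "parent S x < x" "parent S x \<in> verts S"
      using S.parent_edge S.parent_less S.parent_in_V less.prems(1) by auto
    let ?p = "parent S x"
    have E: "(?p, x) \<in> E" using agree p(1) less.prems by blast
    then have x: "x \<in> V" "x \<notin> chain T v" "parent T x = ?p"
      using edge_in_V parent_eqI chain_S less.prems by auto
    have "?p \<in> chain T v \<longleftrightarrow> ?p \<in> chain S w" using chain_S p(3) by auto
    then show ?case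
      using anchor_parent[OF v x(1,2)] S.anchor_parent[OF w less.prems] less.IH[OF p(2,3)] x(3)
      by auto
  qed
  have "{(a,b) \<in> edges S. b \<notin> chain S w} = {(a,b) \<in> E. b \<in> verts S - chain T v}"
    using agree chain_S S.edge_in_V by blast
  then have "edges S = edges (restrict_tree T v (verts S))"
    using S.edges_split[OF w] chain_S unfolding restrict_tree_edges by (simp add: Int_commute)
  then show "S = restrict_tree T v (verts S)" using restrict_tree_verts by (metis prod.collapse)
qed

lemma chain_restrict:
  assumes v: "v \<in> V" and cl: "parent_closed v W" and w: "w \<in> chain T v \<inter> W"
    and w_max: "\<And>c. c \<in> chain T v \<inter> W \<Longrightarrow> c \<le> w"
  shows "chain (restrict_tree T v W) w = chain T v \<inter> W"
proof -
  interpret R: increasing_tree "restrict_tree T v W" using inc_tree_restrict[OF v cl] by unfold_locales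
  have "w \<in> verts (restrict_tree T v W)" using w restrict_tree_verts by simp
  then have "chain (restrict_tree T v W) w = ancestors T w \<inter> W"
    using R.chain_eq_ancestors ancestors_restrict[OF v cl] w by simp
  also have "\<dots> = chain T v \<inter> W" using ancestors_chain[of w v] w w_max by auto
  finally show ?thesis .
qed

lemma
  assumes v: "v \<in> V" and cl: "parent_closed v (V - W)" and vW: "v \<in> W"
  defines "t \<equiv> Max (chain T v \<inter> (V - W))"
  shows Max_chain_compl_in: "t \<in> chain T v \<inter> (V - W)"
    and Max_chain_compl_less: "t < v"
proof -
  have "Min (V - W) \<in> chain T v \<inter> (V - W)" using parent_closed_Min_in_chain[OF v cl] .
  then show t: "t \<in> chain T v \<inter> (V - W)" unfolding t_def using finite_chain by (intro Max_in) auto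
  then show "t < v" using chain_le vW by (metis DiffD2 IntD1 IntD2 le_neq_implies_less)
qed

lemma spl_restrict:
  assumes v: "v \<in> V" and cl: "parent_closed v W" "parent_closed v (V - W)" and vW: "v \<in> W"
  defines "t \<equiv> Max (chain T v \<inter> (V - W))"
  shows "T = spl (restrict_tree T v W) v (restrict_tree T v (V - W)) t"
proof -
  let ?T1 = "restrict_tree T v W" and ?T2 = "restrict_tree T v (V - W)" and ?C = "chain T v"
  interpret R1: increasing_tree ?T1 using inc_tree_restrict[OF v cl(1)] by unfold_locales
  interpret R2: increasing_tree ?T2 using inc_tree_restrict[OF v cl(2)] by unfold_locales
  have W: "W \<subseteq> V" using cl(1) unfolding parent_closed_def by blast
  have t: "t \<in> ?C \<inter> (V - W)" unfolding t_def by (rule Max_chain_compl_in[OF v cl(2) vW])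
  have ch1: "chain ?T1 v = ?C \<inter> W"
    using chain_restrict[OF v cl(1)] self_in_chain[OF v] vW chain_le by simp
  have ch2: "chain ?T2 t = ?C \<inter> (V - W)"
    using chain_restrict[OF v cl(2) t] finite_chain unfolding t_def by simp
  have "edges ?T1 - chain_edges ?T1 v = {(a,b) \<in> E. b \<in> W - ?C}"
    unfolding R1.chain_edges_eq ch1 restrict_tree_edges using consecutive_subset by blast
  moreover have "edges ?T2 - chain_edges ?T2 t = {(a,b) \<in> E. b \<in> (V - W) - ?C}"
    unfolding R2.chain_edges_eq ch2 restrict_tree_edges using consecutive_subset by blast
  moreover have "chain ?T1 v \<union> chain ?T2 t = ?C" using ch1 ch2 chain_subset_V W by blast
  ultimately have "edges (spl ?T1 v ?T2 t) = {(a,b) \<in> E. b \<notin> ?C} \<union> consecutive ?C"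
    unfolding spl_eq using edge_in_V by auto
  then have "edges (spl ?T1 v ?T2 t) = E" using edges_split[OF v] by simp
  moreover have "verts (spl ?T1 v ?T2 t) = V" using W unfolding spl_eq restrict_tree_verts by auto
  ultimately show ?thesis by (metis prod.collapse)
qed

end

section \<open>Splices\<close>

locale spliced = T: increasing_tree T + T1: increasing_tree T1 + T2: increasing_tree T2
  for T T1 T2 +
  fixes v t :: nat
  assumes disjoint: "verts T1 \<inter> verts T2 = {}" and v_in: "v \<in> verts T1"
    and t_in: "t \<in> verts T2" and t_less: "t < v" and T_eq: "T = spl T1 v T2 t"
begin

abbreviation "C1 \<equiv> chain T1 v"
abbreviation "C2 \<equiv> chain T2 t"

lemma verts_eq: "verts T = verts T1 \<union> verts T2"
  using T_eq spl_eq by simp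

lemma v_in_V: "v \<in> verts T"
  using verts_eq v_in by simp

lemma edges_eq:
  "edges T = {(a,b) \<in> edges T1. b \<notin> C1} \<union> {(a,b) \<in> edges T2. b \<notin> C2} \<union> consecutive (C1 \<union> C2)"
  using T_eq spl_eq T1.chain_edges_eq T2.chain_edges_eq by auto

lemma root_in_chains: "T.root \<in> C1 \<union> C2"
proof -
  have "T.root = min T1.root T2.root"
    unfolding T.root_def T1.root_def T2.root_def verts_eq
    using Min_Un T1.finite_V T1.V_nonempty T2.finite_V T2.V_nonempty by blast
  then show ?thesis using T1.root_in_chain[OF v_in] T2.root_in_chain[OF t_in] by (simp add: min_def)
qed

lemma ancestors_chains: "y \<in> C1 \<union> C2 \<Longrightarrow> ancestors T y = (C1 \<union> C2) \<inter> {..y}"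
proof (induction y rule: less_induct)
  case (less y)
  let ?C = "C1 \<union> C2"
  have CV: "?C \<subseteq> verts T" using T1.chain_subset_V T2.chain_subset_V verts_eq by auto
  then have yV: "y \<in> verts T" using less by auto
  show ?case
  proof (cases "y = T.root")
    case True
    have "x = y" if "x \<in> ?C" "x \<le> y" for x
      using that CV T.root_le True by (meson antisym subsetD)
    then have "?C \<inter> {..y} = {y}" using less.prems by auto
    then show ?thesis using True T.ancestors_root by simp
  next
    case False
    let ?p = "Max {c \<in> ?C. c < y}"
    have "T.root < y" using False T.root_le[OF yV] by simp
    then have p: "(?p, y) \<in> consecutive ?C"
      using consecutive_predI[OF _ less.prems root_in_chains] T1.finite_chain T2.finite_chain by simp
    then have "parent T y = ?p" using edges_eq T.parent_eqI by auto
    moreover have "?p \<in> ?C" "?p < y" using p unfolding consecutive_def by auto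
    ultimately show ?thesis
      using T.ancestors_parent[OF yV False] less.IH consecutive_atMost[OF p] by simp
  qed
qed

lemma chain_eq: "chain T v = C1 \<union> C2"
proof -
  have "v \<in> C1 \<union> C2" using T1.self_in_chain[OF v_in] by auto
  then have "chain T v = (C1 \<union> C2) \<inter> {..v}"
    using T.chain_eq_ancestors[OF v_in_V] ancestors_chains by simp
  moreover have "C1 \<union> C2 \<subseteq> {..v}" using T1.chain_le T2.chain_le t_less by fastforce
  ultimately show ?thesis by auto
qed

lemma chain1_eq: "C1 = chain T v \<inter> verts T1"
  using chain_eq T1.chain_subset_V[of v] T2.chain_subset_V[of t] disjoint by blast

lemma chain2_eq: "C2 = chain T v \<inter> verts T2"
  using chain_eq T1.chain_subset_V[of v] T2.chain_subset_V[of t] disjoint by blast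

lemma edges_agree1: "b \<in> verts T1 - C1 \<Longrightarrow> (a,b) \<in> edges T1 \<longleftrightarrow> (a,b) \<in> edges T"
  using edges_eq chain_eq chain1_eq disjoint consecutive_subset T2.edge_in_V by blast

lemma edges_agree2: "b \<in> verts T2 - C2 \<Longrightarrow> (a,b) \<in> edges T2 \<longleftrightarrow> (a,b) \<in> edges T"
  using edges_eq chain_eq chain2_eq disjoint consecutive_subset T1.edge_in_V by blast

lemma anchor1: "x \<in> verts T1 \<Longrightarrow> x \<notin> C1 \<Longrightarrow> anchor T v x = anchor T1 v x"
  using T.anchor_agree[OF v_in_V T1.increasing_tree_axioms v_in chain1_eq] edges_agree1 by blast

lemma anchor2: "x \<in> verts T2 \<Longrightarrow> x \<notin> C2 \<Longrightarrow> anchor T v x = anchor T2 t x"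
  using T.anchor_agree[OF v_in_V T2.increasing_tree_axioms t_in chain2_eq] edges_agree2 by blast

lemma T1_eq: "T1 = restrict_tree T v (verts T1)"
  using T.restrict_agree[OF v_in_V T1.increasing_tree_axioms v_in chain1_eq] edges_agree1 by blast

lemma T2_eq: "T2 = restrict_tree T v (verts T2)"
  using T.restrict_agree[OF v_in_V T2.increasing_tree_axioms t_in chain2_eq] edges_agree2 by blast

lemma t_eq: "t = Max (chain T v \<inter> verts T2)"
  using T2.self_in_chain[OF t_in] T2.chain_le T2.finite_chain chain2_eq by (metis Max_eqI)

end

section \<open>Set partitions\<close>

definition union_of_blocks :: "nat set set \<Rightarrow> nat set \<Rightarrow> bool" where
  "union_of_blocks P W \<longleftrightarrow> W = \<Union>(blocks_in P W)"

locale standard_partition =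
  fixes r :: nat and P :: "nat set set"
  assumes std: "std_partition r P"
begin

lemma Union_P: "\<Union>P = {1..r}" and disjoint_P: "disjoint P" and empty_notin_P: "{} \<notin> P"
  and one_block: "{1} \<in> P"
  using std unfolding std_partition_def partition_on_def by auto

lemma blk_eqI: assumes "B \<in> P" "x \<in> B" shows "blk P x = B"
proof -
  have "B' = B" if "B' \<in> P" "x \<in> B'" for B'
    using disjoint_P that assms unfolding disjoint_def by blast
  then show ?thesis unfolding blk_def using assms by (metis (mono_tags, lifting) the_equality)
qed

lemma mem_blk: assumes "x \<in> {1..r}" shows "x \<in> blk P x"
proof -
  obtain B where B: "B \<in> P" "x \<in> B" using Union_P assms by blast
  then have "blk P x = B" by (rule blk_eqI)
  then show ?thesis using B by simp
qed

lemma block_subset: "B \<in> P \<Longrightarrow> B \<subseteq> {1..r}"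
  using Union_P by auto

lemma finite_block: "B \<in> P \<Longrightarrow> finite B"
  using block_subset finite_subset by blast

lemma block_nonempty: "B \<in> P \<Longrightarrow> B \<noteq> {}"
  using empty_notin_P by auto

lemma blk_one: "blk P 1 = {1}"
  using blk_eqI[OF one_block] by simp

lemma blocks_in_subset: "B \<in> blocks_in P W \<Longrightarrow> B \<subseteq> W"
  unfolding blocks_in_def by auto

lemma blocks_in_blk: "B \<in> blocks_in P W \<Longrightarrow> x \<in> B \<Longrightarrow> blk P x = B"
  unfolding blocks_in_def using blk_eqI by auto

lemma
  assumes "B \<in> blocks_in P W"
  shows Max_block_in: "Max B \<in> B" and Max_block_in_set: "Max B \<in> W"
    and le_Max_block: "x \<in> B \<Longrightarrow> x \<le> Max B"
  using assms finite_block block_nonempty unfolding blocks_in_def by auto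

lemma blocks_in_disjoint:
  assumes "A \<inter> A' = {}" shows "blocks_in P A \<inter> blocks_in P A' = {}"
proof -
  have "B = {}" if "B \<subseteq> A" "B \<subseteq> A'" for B using that assms by blast
  then show ?thesis unfolding blocks_in_def using empty_notin_P by blast
qed

lemma union_of_blocks_subset: "union_of_blocks P W \<Longrightarrow> W \<subseteq> {1..r}"
  unfolding union_of_blocks_def blocks_in_def using block_subset by blast

lemma blk_in_blocks_in:
  assumes "union_of_blocks P W" "x \<in> W" shows "blk P x \<in> blocks_in P W"
proof -
  obtain B where "B \<in> P" "B \<subseteq> W" "x \<in> B"
    using assms unfolding union_of_blocks_def blocks_in_def by blast
  then show ?thesis using blk_eqI unfolding blocks_in_def by simp
qed

lemma blocks_in_Union:
  assumes "K \<subseteq> P" shows "blocks_in P (\<Union>K) = K"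
proof
  show "K \<subseteq> blocks_in P (\<Union>K)" using assms unfolding blocks_in_def by blast
  show "blocks_in P (\<Union>K) \<subseteq> K"
  proof
    fix B assume B: "B \<in> blocks_in P (\<Union>K)"
    then obtain x where x: "x \<in> B" using block_nonempty unfolding blocks_in_def by blast
    then obtain B' where B': "B' \<in> K" "x \<in> B'" using B unfolding blocks_in_def by blast
    have "B = blk P x" using blocks_in_blk[OF B x] by simp
    also have "\<dots> = B'" using blk_eqI B' assms by blast
    finally show "B \<in> K" using B' by simp
  qed
qed

lemma union_of_blocks_Union: "K \<subseteq> P \<Longrightarrow> union_of_blocks P (\<Union>K)"
  unfolding union_of_blocks_def using blocks_in_Union by simp

lemma union_of_blocks_Diff:
  assumes W: "union_of_blocks P W" and A: "union_of_blocks P A"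
  shows "union_of_blocks P (W - A)"
proof -
  have "x \<in> \<Union>(blocks_in P (W - A))" if x: "x \<in> W - A" for x
  proof -
    have B: "blk P x \<in> blocks_in P W" using blk_in_blocks_in[OF W] x by simp
    have "x \<in> blk P x" using mem_blk union_of_blocks_subset[OF W] x by blast
    moreover have "blk P x \<inter> A = {}"
    proof (rule ccontr)
      assume "blk P x \<inter> A \<noteq> {}"
      then obtain y where y: "y \<in> blk P x" "y \<in> A" by blast
      then have "blk P x \<in> blocks_in P A" using blocks_in_blk[OF B] blk_in_blocks_in[OF A] by metis
      then show False using x \<open>x \<in> blk P x\<close> blocks_in_subset by blast
    qed
    ultimately show ?thesis using B unfolding blocks_in_def by blast
  qed
  then show ?thesis unfolding union_of_blocks_def blocks_in_def by blast
qed

lemma block_subset_side: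
  assumes "B \<in> blocks_in P (A \<union> A')" "union_of_blocks P A"
  shows "B \<subseteq> A \<or> B \<subseteq> A' - A"
proof (cases "B \<inter> A = {}")
  case False
  then obtain x where "x \<in> B" "x \<in> A" by auto
  then have "B \<in> blocks_in P A"
    using blocks_in_blk[OF assms(1)] blk_in_blocks_in[OF assms(2)] by metis
  then show ?thesis using blocks_in_subset by blast
qed (use assms blocks_in_subset in blast)

end

section \<open>The dependence graph\<close>

locale pi_tree = increasing_tree T + standard_partition r P for T r P +
  assumes pi_inc_tree: "pi_inc_tree P T"
begin

lemma union_of_blocks_V: "union_of_blocks P V"
  using pi_inc_tree unfolding pi_inc_tree_def union_of_blocks_def by auto

lemma V_subset: "V \<subseteq> {1..r}"
  using union_of_blocks_subset[OF union_of_blocks_V] .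

lemma mem_blk_V: "x \<in> V \<Longrightarrow> x \<in> blk P x"
  using mem_blk V_subset by blast

lemma blk_in_blocks_V: "x \<in> V \<Longrightarrow> blk P x \<in> blocks_in P V"
  using blk_in_blocks_in[OF union_of_blocks_V] .

lemma block_rtrancl:
  assumes "B \<in> blocks_in P V" "i \<in> B" "j \<in> B" "i \<le> j" shows "(i,j) \<in> E\<^sup>*"
proof (cases "i = j")
  case False
  then have "(i,j) \<in> E\<^sup>+" using pi_inc_tree assms unfolding pi_inc_tree_def by auto
  then show ?thesis by simp
qed simp

lemma dep_edges_iff:
  assumes v: "v \<in> V"
  shows "(B,X) \<in> dep_edges P T v \<longleftrightarrow>
    B \<in> blocks_in P V \<and> Max B \<notin> chain T v \<and> X = blk P (anchor T v (Max B))"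
proof
  assume "(B,X) \<in> dep_edges P T v"
  then obtain a where a: "X = blk P a" "B \<in> blocks_in P V" "Max B \<notin> chain T v"
    "a \<in> chain T v" "Max B \<in> comp_verts T v a" unfolding dep_edges_def by blast
  then show "B \<in> blocks_in P V \<and> Max B \<notin> chain T v \<and> X = blk P (anchor T v (Max B))"
    using comp_verts_iff[OF v a(4) a(3)] by simp
next
  assume h: "B \<in> blocks_in P V \<and> Max B \<notin> chain T v \<and> X = blk P (anchor T v (Max B))"
  then have "Max B \<in> V" using Max_block_in_set by blast
  then have "anchor T v (Max B) \<in> chain T v" "Max B \<in> comp_verts T v (anchor T v (Max B))"
    using anchor_in_chain[OF v] comp_verts_iff[OF v _] h by auto
  then show "(B,X) \<in> dep_edges P T v" unfolding dep_edges_def using h by blast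
qed

lemma single_valued_dep_edges:
  assumes "v \<in> V" shows "single_valued (dep_edges P T v)"
proof (rule single_valuedI)
  fix B X Y assume "(B,X) \<in> dep_edges P T v" "(B,Y) \<in> dep_edges P T v"
  then show "X = Y" using dep_edges_iff[OF assms] by simp
qed

lemma dep_edges_blocks:
  assumes v: "v \<in> V" and e: "(B,X) \<in> dep_edges P T v"
  shows "B \<in> blocks_in P V" "X \<in> blocks_in P V"
proof -
  have h: "B \<in> blocks_in P V" "X = blk P (anchor T v (Max B))" using dep_edges_iff[OF v] e by auto
  then have "Max B \<in> V" using Max_block_in_set by blast
  then have "anchor T v (Max B) \<in> V" using anchor_in_chain[OF v] chain_subset_V by blast
  then show "B \<in> blocks_in P V" "X \<in> blocks_in P V" using blk_in_blocks_V h by auto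
qed

lemma dep_edge_blk:
  assumes v: "v \<in> V" and x: "x \<in> V" "x \<notin> chain T v"
  shows "(blk P x, blk P (anchor T v x)) \<in> dep_edges P T v"
proof -
  let ?B = "blk P x"
  have B: "?B \<in> blocks_in P V" using blk_in_blocks_V x by simp
  have xB: "x \<in> ?B" using mem_blk_V x by blast
  have p: "(x, Max ?B) \<in> E\<^sup>*"
    using block_rtrancl[OF B xB Max_block_in[OF B] le_Max_block[OF B xB]] .
  show ?thesis unfolding dep_edges_iff[OF v]
    using B anchor_descendant[OF v p x(2)] by simp
qed

definition dep_comp :: "nat \<Rightarrow> nat set set" where
  "dep_comp v = {B \<in> blocks_in P V. (blk P v, B) \<in> (symcl (dep_edges P T v))\<^sup>*}"

definition dep_comp_verts :: "nat \<Rightarrow> nat set" where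
  "dep_comp_verts v = \<Union>(dep_comp v)"

lemma dep_comp_subset: "dep_comp v \<subseteq> blocks_in P V"
  unfolding dep_comp_def by auto

lemma blk_in_dep_comp: "v \<in> V \<Longrightarrow> blk P v \<in> dep_comp v"
  unfolding dep_comp_def using blk_in_blocks_V by auto

lemma dep_comp_closed:
  assumes v: "v \<in> V" and e: "(B,X) \<in> dep_edges P T v"
  shows "B \<in> dep_comp v \<longleftrightarrow> X \<in> dep_comp v"
proof -
  have "(B,X) \<in> symcl (dep_edges P T v)" "(X,B) \<in> symcl (dep_edges P T v)" using e by auto
  then have "(blk P v, B) \<in> (symcl (dep_edges P T v))\<^sup>* \<longleftrightarrow> (blk P v, X) \<in> (symcl (dep_edges P T v))\<^sup>*"
    by (meson rtrancl.rtrancl_into_rtrancl)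
  then show ?thesis unfolding dep_comp_def using dep_edges_blocks[OF v e] by blast
qed

lemma dep_comp_subset_P: "dep_comp v \<subseteq> P"
  using dep_comp_subset unfolding blocks_in_def by auto

lemma blocks_in_dep_comp_verts: "blocks_in P (dep_comp_verts v) = dep_comp v"
  unfolding dep_comp_verts_def by (rule blocks_in_Union[OF dep_comp_subset_P])

lemma union_of_blocks_dep_comp_verts: "union_of_blocks P (dep_comp_verts v)"
  unfolding dep_comp_verts_def by (rule union_of_blocks_Union[OF dep_comp_subset_P])

lemma dep_comp_verts_subset: "dep_comp_verts v \<subseteq> V"
  unfolding dep_comp_verts_def using dep_comp_subset blocks_in_subset by blast

lemma dep_comp_verts_iff:
  assumes "x \<in> V" shows "x \<in> dep_comp_verts v \<longleftrightarrow> blk P x \<in> dep_comp v"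
proof
  assume "x \<in> dep_comp_verts v"
  then obtain B where "B \<in> dep_comp v" "x \<in> B" unfolding dep_comp_verts_def by auto
  then show "blk P x \<in> dep_comp v" using blocks_in_blk dep_comp_subset by blast
qed (use mem_blk_V[OF assms] in \<open>auto simp: dep_comp_verts_def\<close>)

lemma self_in_dep_comp_verts: "v \<in> V \<Longrightarrow> v \<in> dep_comp_verts v"
  using dep_comp_verts_iff blk_in_dep_comp by simp

lemma dep_comp_verts_anchor:
  assumes v: "v \<in> V" and x: "x \<in> V" "x \<notin> chain T v"
  shows "x \<in> dep_comp_verts v \<longleftrightarrow> anchor T v x \<in> dep_comp_verts v"
proof -
  have "anchor T v x \<in> V" using anchor_in_chain[OF v x(1)] chain_subset_V by blast
  then show ?thesis
    using dep_comp_closed[OF v dep_edge_blk[OF v x]] dep_comp_verts_iff x(1) by simp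
qed

lemma dep_comp_verts_parent:
  assumes v: "v \<in> V" and x: "x \<in> V" "x \<notin> chain T v"
  shows "x \<in> dep_comp_verts v \<longleftrightarrow> parent T x \<in> dep_comp_verts v"
proof -
  have "x \<noteq> root" using x root_in_chain[OF v] by auto
  then have "parent T x \<in> V" using parent_in_V x(1) by blast
  then show ?thesis
    using dep_comp_verts_anchor[OF v x] dep_comp_verts_anchor[OF v] anchor_parent[OF v x]
    by (cases "parent T x \<in> chain T v") simp_all
qed

lemma parent_closed_dep_comp_verts: "v \<in> V \<Longrightarrow> parent_closed v (dep_comp_verts v)"
  unfolding parent_closed_def
  using dep_comp_verts_subset self_in_dep_comp_verts dep_comp_verts_parent by blast

lemma parent_closed_compl:
  assumes v: "v \<in> V" and ne: "dep_comp_verts v \<noteq> V"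
  shows "parent_closed v (V - dep_comp_verts v)"
proof -
  have "parent T x \<in> V - dep_comp_verts v" if x: "x \<in> V - dep_comp_verts v" "x \<notin> chain T v" for x
  proof -
    have "x \<noteq> root" using x root_in_chain[OF v] by auto
    then show ?thesis using dep_comp_verts_parent[OF v _ x(2)] x parent_in_V by blast
  qed
  then show ?thesis unfolding parent_closed_def using ne dep_comp_verts_subset by blast
qed

lemma dep_connected_if_dep_comp_verts_eq:
  assumes "dep_comp_verts v = V" shows "dep_connected P T v"
proof -
  have "dep_comp v = blocks_in P V" using assms blocks_in_dep_comp_verts by metis
  then show ?thesis unfolding dep_connected_def dep_comp_def
    by (blast intro: rtrancl_trans rtrancl_symcl_sym)
qed

text \<open>A block whose maximum is v is a sink of $G_v(T)$; since $G_v(T)$ is functional,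
  whatever is connected to it reaches it by a directed path.\<close>

lemma
  assumes v: "v \<in> V" and top: "Max (blk P v) = v"
  shows top_block_sink: "(blk P v, X) \<notin> dep_edges P T v"
    and top_block_reach: "(B, blk P v) \<in> (symcl (dep_edges P T v))\<^sup>* \<Longrightarrow> (B, blk P v) \<in> (dep_edges P T v)\<^sup>*"
proof -
  show sink: "(blk P v, X) \<notin> dep_edges P T v" for X
    using dep_edges_iff[OF v] top self_in_chain[OF v] by simp
  show "(B, blk P v) \<in> (symcl (dep_edges P T v))\<^sup>* \<Longrightarrow> (B, blk P v) \<in> (dep_edges P T v)\<^sup>*"
    by (rule single_valued_rtrancl_sink_symcl[OF single_valued_dep_edges[OF v] sink])
qed

text \<open>An edge into $\{1\}$ comes from a block anchored at the root 1, and a block anchored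
  at 1 can only point to $\{1\}$.\<close>

lemma anchored_at_one_closed:
  assumes v: "v \<in> V" and one: "1 \<in> V" and e: "(B,X) \<in> dep_edges P T v"
  defines "A \<equiv> {B \<in> blocks_in P V. B = {1} \<or> (Max B \<notin> chain T v \<and> anchor T v (Max B) = 1)}"
  shows "B \<in> A \<longleftrightarrow> X \<in> A"
proof -
  have root: "root = 1" using root_le[OF one] root_in_V V_subset by fastforce
  have B: "B \<in> blocks_in P V" "Max B \<notin> chain T v" "X = blk P (anchor T v (Max B))"
    using e dep_edges_iff[OF v] by auto
  have X: "X \<in> blocks_in P V" using dep_edges_blocks[OF v e] by simp
  let ?a = "anchor T v (Max B)"
  have a: "?a \<in> chain T v" "?a \<in> V" "?a \<in> X"
    using Max_block_in_set[OF B(1)] anchor_in_chain[OF v] chain_subset_V mem_blk_V B(3) by blast+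
  show ?thesis
  proof
    assume "B \<in> A"
    moreover have "B \<noteq> {1}" using B(2) root root_in_chain[OF v] by auto
    ultimately have "?a = 1" unfolding A_def by auto
    then show "X \<in> A" using B(3) blk_one X unfolding A_def by simp
  next
    assume XA: "X \<in> A"
    have "X = {1}"
    proof (rule ccontr)
      assume "X \<noteq> {1}"
      then have mX: "Max X \<notin> chain T v" "anchor T v (Max X) = 1" using XA unfolding A_def by auto
      have "(?a, Max X) \<in> E\<^sup>*"
        using block_rtrancl[OF X a(3) Max_block_in[OF X] le_Max_block[OF X a(3)]] .
      then have "?a \<le> 1" using anchor_greatest[OF v Max_block_in_set[OF X] a(1)] mX by simp
      then have "?a = 1" using a(2) V_subset by fastforce
      then show False using B(3) blk_one \<open>X \<noteq> {1}\<close> by simp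
    qed
    then have "?a = 1" using a(3) by simp
    then show "B \<in> A" using B unfolding A_def by simp
  qed
qed

lemma one_notin_dep_comp_verts:
  assumes v: "v \<in> V" and one: "1 \<in> V" and top: "Max (blk P v) = v" and v1: "v \<noteq> 1"
  shows "1 \<notin> dep_comp_verts v"
proof
  let ?A = "{B \<in> blocks_in P V. B = {1} \<or> (Max B \<notin> chain T v \<and> anchor T v (Max B) = 1)}"
  assume "1 \<in> dep_comp_verts v"
  then have "(blk P v, {1}) \<in> (symcl (dep_edges P T v))\<^sup>*"
    using dep_comp_verts_iff[OF one] blk_one unfolding dep_comp_def by simp
  then have "blk P v \<in> ?A \<longleftrightarrow> {1} \<in> ?A"
    by (rule rtrancl_symcl_closed) (rule anchored_at_one_closed[OF v one])
  moreover have "{1} \<in> ?A" using blk_in_blocks_V[OF one] blk_one by simp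
  moreover have "blk P v \<noteq> {1}" using mem_blk_V[OF v] v1 by blast
  ultimately show False using top self_in_chain[OF v] by auto
qed

end

section \<open>Decomposition at a vertex\<close>

definition splice_at :: "nat set set \<Rightarrow> tree \<Rightarrow> nat \<Rightarrow> tree \<Rightarrow> tree \<Rightarrow> nat \<Rightarrow> bool" where
  "splice_at P T v T1 T2 t \<longleftrightarrow> pi_inc_tree P T1 \<and> pi_inc_tree P T2 \<and> verts T1 \<inter> verts T2 = {}
     \<and> v \<in> verts T1 \<and> t \<in> verts T2 \<and> t < v \<and> T = spl T1 v T2 t"

lemma splice_at_verts: "splice_at P T v T1 T2 t \<Longrightarrow> verts T = verts T1 \<union> verts T2"
  unfolding splice_at_def using spl_eq by simp

lemma splice_atD:
  assumes "splice_at P T v T1 T2 t"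
  shows "pi_inc_tree P T1" "pi_inc_tree P T2" "verts T1 \<inter> verts T2 = {}" "v \<in> verts T1"
    "t \<in> verts T2" "t < v"
  using assms unfolding splice_at_def by simp_all

lemma (in standard_partition) pi_tree_if_pi_inc_tree: "pi_inc_tree P S \<Longrightarrow> pi_tree S r P"
  using std unfolding pi_tree_def pi_tree_axioms_def increasing_tree_def standard_partition_def
  pi_inc_tree_def by blast

context pi_tree
begin

lemma pi_inc_tree_restrict:
  assumes v: "v \<in> V" and cl: "parent_closed v W" and W: "union_of_blocks P W"
  shows "pi_inc_tree P (restrict_tree T v W)"
proof -
  have "(i,j) \<in> (edges (restrict_tree T v W))\<^sup>+"
    if B: "B \<in> blocks_in P W" and ij: "i \<in> B" "j \<in> B" "i < j" for B i j
  proof -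
    have "W \<subseteq> V" using cl unfolding parent_closed_def by blast
    then have "B \<in> blocks_in P V" using B unfolding blocks_in_def by blast
    then have "(i,j) \<in> E\<^sup>*" using block_rtrancl ij by simp
    moreover have "i \<in> W" "j \<in> W" using B ij blocks_in_subset by blast+
    ultimately have "i \<in> ancestors (restrict_tree T v W) j"
      using ancestors_restrict[OF v cl] unfolding ancestors_def by blast
    then show ?thesis using ij(3) rtrancl_eq_or_trancl[of i j] unfolding ancestors_def by auto
  qed
  then show ?thesis
    using inc_tree_restrict[OF v cl] W unfolding pi_inc_tree_def union_of_blocks_def restrict_tree_verts
    by (intro conjI ballI impI) auto
qed

lemma dep_edges_side:
  assumes v: "v \<in> V" and S: "pi_tree S r P" and w: "w \<in> verts S" and SV: "verts S \<subseteq> V"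
    and chain_S: "chain S w = chain T v \<inter> verts S"
    and anchor_S: "\<And>x. x \<in> verts S \<Longrightarrow> x \<notin> chain S w \<Longrightarrow> anchor T v x = anchor S w x"
    and B: "B \<in> blocks_in P (verts S)"
  shows "(B,X) \<in> dep_edges P T v \<longleftrightarrow> (B,X) \<in> dep_edges P S w"
proof -
  interpret S: pi_tree S r P by (fact S)
  have "Max B \<in> verts S" using Max_block_in_set[OF B] .
  moreover have "B \<in> blocks_in P V" using B SV unfolding blocks_in_def by auto
  ultimately show ?thesis
    using dep_edges_iff[OF v] S.dep_edges_iff[OF w] chain_S anchor_S B by auto
qed

lemma dep_edges_spl:
  assumes "splice_at P T v T1 T2 t"
  shows "dep_edges P T v = dep_edges P T1 v \<union> dep_edges P T2 t"
proof -
  interpret T1: pi_tree T1 r P using assms pi_tree_if_pi_inc_tree unfolding splice_at_def by blast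
  interpret T2: pi_tree T2 r P using assms pi_tree_if_pi_inc_tree unfolding splice_at_def by blast
  interpret S: spliced T T1 T2 v t
    using assms unfolding splice_at_def by unfold_locales auto
  have side1: "(B,X) \<in> dep_edges P T v \<longleftrightarrow> (B,X) \<in> dep_edges P T1 v"
    if "B \<in> blocks_in P (verts T1)" for B X
    using dep_edges_side[OF S.v_in_V T1.pi_tree_axioms S.v_in _ S.chain1_eq S.anchor1 that]
      S.verts_eq by blast
  have side2: "(B,X) \<in> dep_edges P T v \<longleftrightarrow> (B,X) \<in> dep_edges P T2 t"
    if "B \<in> blocks_in P (verts T2)" for B X
    using dep_edges_side[OF S.v_in_V T2.pi_tree_axioms S.t_in _ S.chain2_eq S.anchor2 that]
      S.verts_eq by blast
  have not2: "(B,X) \<notin> dep_edges P T2 t" if "B \<in> blocks_in P (verts T1)" for B X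
    using that T2.dep_edges_blocks(1)[OF S.t_in] blocks_in_disjoint[OF S.disjoint] by blast
  have not1: "(B,X) \<notin> dep_edges P T1 v" if "B \<in> blocks_in P (verts T2)" for B X
    using that T1.dep_edges_blocks(1)[OF S.v_in] blocks_in_disjoint[OF S.disjoint] by blast
  have "(B,X) \<in> dep_edges P T v \<longleftrightarrow> (B,X) \<in> dep_edges P T1 v \<or> (B,X) \<in> dep_edges P T2 t" for B X
  proof (cases "B \<in> blocks_in P V")
    case True
    then have "B \<in> blocks_in P (verts T1 \<union> verts T2)" using S.verts_eq by simp
    then have "B \<subseteq> verts T1 \<or> B \<subseteq> verts T2"
      using block_subset_side T1.union_of_blocks_V by blast
    then have "B \<in> blocks_in P (verts T1) \<or> B \<in> blocks_in P (verts T2)"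
      using True unfolding blocks_in_def by blast
    then show ?thesis using side1 side2 not1 not2 by blast
  next
    case False
    have "blocks_in P (verts T1) \<subseteq> blocks_in P V" "blocks_in P (verts T2) \<subseteq> blocks_in P V"
      using S.verts_eq unfolding blocks_in_def by auto
    then show ?thesis
      using False dep_edges_blocks(1)[OF S.v_in_V] T1.dep_edges_blocks(1)[OF S.v_in]
        T2.dep_edges_blocks(1)[OF S.t_in] by blast
  qed
  then show ?thesis by auto
qed

definition canonical_splice :: "nat \<Rightarrow> tree \<times> tree \<times> nat" where
  "canonical_splice v = (restrict_tree T v (dep_comp_verts v), restrict_tree T v (V - dep_comp_verts v),
     Max (chain T v \<inter> (V - dep_comp_verts v)))"

text \<open>The vertex set of the irreducible part is forced: it is the union of the blocks
  connected to $\pi^v$ in $G_v(T)$.\<close>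

lemma splice_unique:
  assumes sp: "splice_at P T v T1 T2 t" and con: "dep_connected P T1 v"
  shows "(T1,T2,t) = canonical_splice v"
proof -
  interpret T1: pi_tree T1 r P using sp pi_tree_if_pi_inc_tree unfolding splice_at_def by blast
  interpret T2: pi_tree T2 r P using sp pi_tree_if_pi_inc_tree unfolding splice_at_def by blast
  interpret S: spliced T T1 T2 v t
    using sp unfolding splice_at_def by unfold_locales auto
  let ?R = "dep_edges P T v"
  have R: "?R = dep_edges P T1 v \<union> dep_edges P T2 t" using dep_edges_spl[OF sp] .
  have bv: "blk P v \<in> blocks_in P (verts T1)" using T1.blk_in_blocks_V[OF S.v_in] .
  have "blocks_in P (verts T1) \<subseteq> dep_comp v"
  proof
    fix B assume B: "B \<in> blocks_in P (verts T1)"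
    have "(blk P v, B) \<in> (symcl (dep_edges P T1 v))\<^sup>*"
      using con B bv unfolding dep_connected_def by blast
    moreover have "symcl (dep_edges P T1 v) \<subseteq> symcl ?R" using R by auto
    ultimately have "(blk P v, B) \<in> (symcl ?R)\<^sup>*" using rtrancl_mono by blast
    moreover have "B \<in> blocks_in P V" using B S.verts_eq unfolding blocks_in_def by auto
    ultimately show "B \<in> dep_comp v" unfolding dep_comp_def by simp
  qed
  moreover have "dep_comp v \<subseteq> blocks_in P (verts T1)"
  proof
    fix B assume "B \<in> dep_comp v"
    then have path: "(blk P v, B) \<in> (symcl ?R)\<^sup>*" unfolding dep_comp_def by simp
    have "a \<in> blocks_in P (verts T1) \<longleftrightarrow> b \<in> blocks_in P (verts T1)" if "(a,b) \<in> ?R" for a b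
      using that R T1.dep_edges_blocks[OF S.v_in] T2.dep_edges_blocks[OF S.t_in]
        blocks_in_disjoint[OF S.disjoint] by blast
    then show "B \<in> blocks_in P (verts T1)" using rtrancl_symcl_closed[OF path] bv by blast
  qed
  ultimately have "verts T1 = dep_comp_verts v"
    using T1.union_of_blocks_V unfolding union_of_blocks_def dep_comp_verts_def by simp
  moreover from this have "verts T2 = V - dep_comp_verts v" using S.verts_eq S.disjoint by auto
  ultimately show ?thesis
    unfolding canonical_splice_def using S.T1_eq S.T2_eq S.t_eq by simp
qed

lemma dep_connected_canonical:
  assumes v: "v \<in> V" and sp: "splice_at P T v T1 T2 t" and T1: "T1 = restrict_tree T v (dep_comp_verts v)"
  shows "dep_connected P T1 v"
proof -
  interpret T2: pi_tree T2 r P using sp pi_tree_if_pi_inc_tree unfolding splice_at_def by blast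
  have VT1: "verts T1 = dep_comp_verts v" using T1 restrict_tree_verts by simp
  have R: "dep_edges P T v = dep_edges P T1 v \<union> dep_edges P T2 t" using dep_edges_spl[OF sp] .
  have t: "t \<in> verts T2" and disj: "verts T1 \<inter> verts T2 = {}" using sp unfolding splice_at_def by auto
  have step: "(a,b) \<in> dep_edges P T1 v \<and> a \<in> dep_comp v \<and> b \<in> dep_comp v"
    if ab: "(a,b) \<in> dep_edges P T v" "a \<in> dep_comp v \<or> b \<in> dep_comp v" for a b
  proof -
    have k: "a \<in> dep_comp v" "b \<in> dep_comp v" using dep_comp_closed[OF v ab(1)] ab(2) by blast+
    then have "a \<notin> blocks_in P (verts T2)"
      using blocks_in_disjoint[OF disj] blocks_in_dep_comp_verts VT1 by auto
    then show ?thesis using ab(1) R k T2.dep_edges_blocks[OF t] by blast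
  qed
  have "(blk P v, B) \<in> (symcl (dep_edges P T1 v))\<^sup>*" if "B \<in> dep_comp v" for B
    using rtrancl_symcl_restrict[OF _ blk_in_dep_comp[OF v] step] that unfolding dep_comp_def by blast
  then show ?thesis
    unfolding dep_connected_def VT1 blocks_in_dep_comp_verts
    by (meson rtrancl_symcl_sym rtrancl_trans)
qed

lemma splice_at_canonical:
  assumes v: "v \<in> V" and ne: "dep_comp_verts v \<noteq> V" and T12: "canonical_splice v = (T1,T2,t)"
  shows "splice_at P T v T1 T2 t" "dep_connected P T1 v"
proof -
  let ?W = "dep_comp_verts v"
  have cl: "parent_closed v ?W" "parent_closed v (V - ?W)"
    using parent_closed_dep_comp_verts[OF v] parent_closed_compl[OF v ne] .
  have vW: "v \<in> ?W" using self_in_dep_comp_verts[OF v] .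
  have T: "T1 = restrict_tree T v ?W" "T2 = restrict_tree T v (V - ?W)" "t = Max (chain T v \<inter> (V - ?W))"
    using T12 unfolding canonical_splice_def by auto
  show sp: "splice_at P T v T1 T2 t"
    unfolding splice_at_def T restrict_tree_verts
    using pi_inc_tree_restrict[OF v cl(1) union_of_blocks_dep_comp_verts]
      pi_inc_tree_restrict[OF v cl(2) union_of_blocks_Diff[OF union_of_blocks_V union_of_blocks_dep_comp_verts]]
      Max_chain_compl_in[OF v cl(2) vW] Max_chain_compl_less[OF v cl(2) vW] spl_restrict[OF v cl vW] vW
    by auto
  show "dep_connected P T1 v" by (rule dep_connected_canonical[OF v sp T(1)])
qed

end

section \<open>The maximum and the second maximum vertex\<close>

locale pi_tree_two_blocks = pi_tree T r P for T r P +
  assumes two_blocks: "card (blocks_in P (verts T)) \<ge> 2"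
begin

definition maxv :: nat where "maxv = Max V"
definition secv :: nat where "secv = Max (V - blk P maxv)"

abbreviation "Bmax \<equiv> blk P maxv"
abbreviation "Bsec \<equiv> blk P secv"

lemma maxv_in_V: "maxv \<in> V"
  unfolding maxv_def using finite_V V_nonempty by simp

lemma le_maxv: "x \<in> V \<Longrightarrow> x \<le> maxv"
  unfolding maxv_def using finite_V by simp

lemma Bmax_in_blocks: "Bmax \<in> blocks_in P V"
  using blk_in_blocks_V[OF maxv_in_V] .

lemma Max_Bmax: "Max Bmax = maxv"
proof (rule Max_eqI)
  show "finite Bmax" using Bmax_in_blocks finite_block unfolding blocks_in_def by blast
  show "maxv \<in> Bmax" using mem_blk_V[OF maxv_in_V] .
  show "x \<le> maxv" if "x \<in> Bmax" for x using that Bmax_in_blocks blocks_in_subset le_maxv by blast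
qed

lemma V_diff_Bmax: "V - Bmax \<noteq> {}"
proof
  assume "V - Bmax = {}"
  have "B = Bmax" if B: "B \<in> blocks_in P V" for B
  proof -
    obtain x where "x \<in> B" using B block_nonempty unfolding blocks_in_def by blast
    moreover have "x \<in> Bmax" using \<open>V - Bmax = {}\<close> \<open>x \<in> B\<close> B blocks_in_subset by blast
    ultimately show ?thesis using blocks_in_blk[OF B] blocks_in_blk[OF Bmax_in_blocks] by metis
  qed
  then have "blocks_in P V \<subseteq> {Bmax}" by blast
  then have "card (blocks_in P V) \<le> 1" using card_mono[of "{Bmax}"] by simp
  then show False using two_blocks by simp
qed

lemma secv_in: "secv \<in> V - Bmax"
  unfolding secv_def using V_diff_Bmax finite_V by (intro Max_in) auto

lemma le_secv: "x \<in> V - Bmax \<Longrightarrow> x \<le> secv"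
  unfolding secv_def using finite_V by simp

lemma secv_in_V: "secv \<in> V"
  using secv_in by simp

lemma secv_less: "secv < maxv"
  using secv_in le_maxv mem_blk_V[OF maxv_in_V] by (metis DiffE order.not_eq_order_implies_strict)

lemma Bsec_in_blocks: "Bsec \<in> blocks_in P V"
  using blk_in_blocks_V[OF secv_in_V] .

lemma Bsec_neq_Bmax: "Bsec \<noteq> Bmax"
  using mem_blk_V[OF secv_in_V] secv_in by auto

lemma Max_Bsec: "Max Bsec = secv"
proof (rule Max_eqI)
  show "finite Bsec" using Bsec_in_blocks finite_block unfolding blocks_in_def by blast
  show "secv \<in> Bsec" using mem_blk_V[OF secv_in_V] .
  show "x \<le> secv" if "x \<in> Bsec" for x
  proof -
    have "blk P x = Bsec" using blocks_in_blk[OF Bsec_in_blocks that] .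
    then have "x \<notin> Bmax" using blocks_in_blk[OF Bmax_in_blocks] Bsec_neq_Bmax by metis
    then show ?thesis using le_secv that Bsec_in_blocks blocks_in_subset by blast
  qed
qed

lemma maxv_neq_one: "maxv \<noteq> 1"
  using secv_less secv_in_V V_subset by fastforce

lemma Max_splice_maxv:
  assumes sp: "splice_at P T maxv T1 T2 t" shows "Max (verts T1) = maxv"
proof (rule Max_eqI)
  have V1: "verts T1 \<subseteq> V" using splice_at_verts[OF sp] by blast
  then show "finite (verts T1)" using finite_V finite_subset by blast
  show "x \<le> maxv" if "x \<in> verts T1" for x using that V1 le_maxv by blast
  show "maxv \<in> verts T1" using splice_atD(4)[OF sp] .
qed

lemma reducible_splice:
  assumes red: "\<not> dep_connected P T maxv"
  shows "\<exists>!(T1,T2,t). splice_at P T maxv T1 T2 t \<and> irreducible_tree P T1"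
proof -
  obtain T1 T2 t where can: "canonical_splice maxv = (T1,T2,t)" by (cases "canonical_splice maxv") auto
  have "dep_comp_verts maxv \<noteq> V" using red dep_connected_if_dep_comp_verts_eq by blast
  then have "splice_at P T maxv T1 T2 t" "dep_connected P T1 maxv"
    using splice_at_canonical[OF maxv_in_V _ can] by auto
  then have "splice_at P T maxv T1 T2 t \<and> irreducible_tree P T1"
    using Max_splice_maxv splice_atD(1) unfolding irreducible_tree_def by simp
  moreover have "(T1',T2',t') = (T1,T2,t)"
    if h: "splice_at P T maxv T1' T2' t' \<and> irreducible_tree P T1'" for T1' T2' t'
  proof -
    have "Max (verts T1') = maxv" using Max_splice_maxv h by blast
    then have "dep_connected P T1' maxv" using h unfolding irreducible_tree_def by simp
    then show ?thesis using splice_unique[OF conjunct1[OF h]] can by simp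
  qed
  ultimately show ?thesis by (rule ex1_tripleI)
qed

lemma reducible_splice_one:
  assumes sp: "splice_at P T maxv T1 T2 t" and irr: "irreducible_tree P T1" and one: "1 \<in> V"
  shows "1 \<in> verts T2"
proof -
  have "(T1,T2,t) = canonical_splice maxv"
    using splice_unique[OF sp] irr Max_splice_maxv[OF sp] unfolding irreducible_tree_def by simp
  then have "verts T1 = dep_comp_verts maxv" by (simp add: canonical_splice_def restrict_tree_verts)
  moreover have "1 \<notin> dep_comp_verts maxv"
    using one_notin_dep_comp_verts[OF maxv_in_V one Max_Bmax maxv_neq_one] .
  ultimately show ?thesis using splice_at_verts[OF sp] one by blast
qed

end

locale irreducible_pi_tree = pi_tree_two_blocks T r P for T r P +
  assumes connected: "dep_connected P T maxv"
begin

abbreviation "Cmax \<equiv> chain T maxv"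
abbreviation "Csec \<equiv> chain T secv"

definition branch :: nat where "branch = anchor T secv maxv"

abbreviation "Bbranch \<equiv> blk P branch"

lemma reach_Bmax: "B \<in> blocks_in P V \<Longrightarrow> (B, Bmax) \<in> (dep_edges P T maxv)\<^sup>*"
  using top_block_reach[OF maxv_in_V Max_Bmax] connected Bmax_in_blocks
  unfolding dep_connected_def by blast

lemma Bmax_if_Max_in_chain:
  assumes B: "B \<in> blocks_in P V" and mc: "Max B \<in> Cmax" shows "B = Bmax"
  using reach_Bmax[OF B]
proof (cases rule: converse_rtranclE)
  case (step X)
  then show ?thesis using dep_edges_iff[OF maxv_in_V] mc by simp
qed

lemma Bmax_if_loop: "B \<in> blocks_in P V \<Longrightarrow> (B,B) \<in> dep_edges P T maxv \<Longrightarrow> B = Bmax"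
  using single_valued_rtrancl_loop[OF single_valued_dep_edges[OF maxv_in_V]] reach_Bmax by blast

lemma maxv_notin_Csec: "maxv \<notin> Csec"
  using chain_le secv_less by fastforce

lemma branch_in_chains: "branch \<in> Csec \<inter> Cmax"
  unfolding branch_def using anchor_in_chains[OF secv_in_V maxv_in_V] .

lemma branch_in_V: "branch \<in> V"
  using branch_in_chains chain_subset_V by blast

text \<open>In $G_m(T)$ the block $\pi^M$ points to the block of the branch point c, which is
  a loop; as $\pi^m$ is a sink, $\pi^M$ lies outside the component of $\pi^m$.\<close>

lemma Bmax_to_Bbranch: "(Bmax, Bbranch) \<in> dep_edges P T secv"
  using dep_edges_iff[OF secv_in_V] Bmax_in_blocks Max_Bmax maxv_notin_Csec branch_def by simp

lemma Bbranch_loop: "(Bbranch, Bbranch) \<in> dep_edges P T secv"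
proof (cases "Bbranch = Bmax")
  case True
  then show ?thesis using Bmax_to_Bbranch by simp
next
  case False
  let ?mu = "Max Bbranch"
  have B: "Bbranch \<in> blocks_in P V" using blk_in_blocks_V[OF branch_in_V] .
  have c: "branch \<in> Bbranch" using mem_blk_V[OF branch_in_V] .
  have mu: "?mu \<in> V" "?mu \<notin> Cmax"
    using Max_block_in_set[OF B] Bmax_if_Max_in_chain[OF B] False by auto
  have "(branch, ?mu) \<in> E\<^sup>*" using block_rtrancl[OF B c Max_block_in[OF B] le_Max_block[OF B c]] .
  moreover have "anchor T maxv ?mu \<noteq> branch"
    using Bmax_if_loop[OF B] False dep_edges_iff[OF maxv_in_V] B mu(2) by auto
  ultimately have "?mu \<notin> Csec" "anchor T secv ?mu = branch"
    using anchor_past_branch[OF secv_in_V maxv_in_V mu(1)] unfolding branch_def by auto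
  then show ?thesis using dep_edges_iff[OF secv_in_V] B by simp
qed

lemma Bmax_notin_dep_comp_secv: "Bmax \<notin> dep_comp secv"
proof
  let ?R = "dep_edges P T secv"
  assume "Bmax \<in> dep_comp secv"
  then have "(Bsec, Bmax) \<in> (symcl ?R)\<^sup>*" unfolding dep_comp_def by simp
  then have "(Bmax, Bsec) \<in> ?R\<^sup>*" by (rule top_block_reach[OF secv_in_V Max_Bsec rtrancl_symcl_sym])
  then have "(Bbranch, Bsec) \<in> ?R\<^sup>*"
  proof (cases rule: converse_rtranclE)
    case base
    then show ?thesis using Bsec_neq_Bmax by blast
  next
    case (step X)
    have "X = Bbranch"
      using single_valuedD[OF single_valued_dep_edges[OF secv_in_V] step(1) Bmax_to_Bbranch] .
    then show ?thesis using step(2) by simp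
  qed
  then have "Bbranch = Bsec"
    by (rule single_valued_rtrancl_loop[OF single_valued_dep_edges[OF secv_in_V] _ Bbranch_loop])
  then show False using top_block_sink[OF secv_in_V Max_Bsec] Bbranch_loop by simp
qed

lemma maxv_notin_dep_comp_verts_secv: "maxv \<notin> dep_comp_verts secv"
  using dep_comp_verts_iff[OF maxv_in_V] Bmax_notin_dep_comp_secv by simp

lemma branch_notin_dep_comp_verts_secv: "branch \<notin> dep_comp_verts secv"
  using dep_comp_verts_anchor[OF secv_in_V maxv_in_V maxv_notin_Csec] maxv_notin_dep_comp_verts_secv
  unfolding branch_def by simp

lemma anchor_maxv_compl:
  assumes x: "x \<in> V - dep_comp_verts secv" "x \<notin> Cmax"
  shows "anchor T maxv x \<in> V - dep_comp_verts secv"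
proof -
  let ?a = "anchor T maxv x"
  have xV: "x \<in> V" using x by simp
  have a: "?a \<in> V" "?a \<in> Cmax" using anchor_in_chain[OF maxv_in_V xV] chain_subset_V by blast+
  consider "(branch, x) \<notin> E\<^sup>*" | "?a = branch" | "(branch, x) \<in> E\<^sup>*" "?a \<noteq> branch" by blast
  then show ?thesis
  proof cases
    case 1
    then show ?thesis
      using anchor_off_branch[OF secv_in_V maxv_in_V xV x(2)] dep_comp_verts_anchor[OF secv_in_V xV] x a
      unfolding branch_def by auto
  next
    case 2
    then show ?thesis using branch_notin_dep_comp_verts_secv branch_in_V by simp
  next
    case 3
    have "branch \<le> ?a" using anchor_greatest[OF maxv_in_V xV] branch_in_chains 3(1) by blast
    then have "(branch, ?a) \<in> E\<^sup>*" using chain_rtrancl a(2) branch_in_chains by blast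
    moreover have "anchor T maxv ?a \<noteq> branch" using anchor_chain[OF a(2)] 3(2) by simp
    ultimately have "?a \<notin> Csec" "anchor T secv ?a = branch"
      using anchor_past_branch[OF secv_in_V maxv_in_V a(1)] unfolding branch_def by auto
    then show ?thesis
      using dep_comp_verts_anchor[OF secv_in_V a(1)] branch_notin_dep_comp_verts_secv a(1) by simp
  qed
qed

lemma anchor_maxv_dep_comp:
  assumes x: "x \<in> dep_comp_verts secv" "x \<notin> Cmax"
  shows "anchor T maxv x \<in> dep_comp_verts secv \<or> anchor T maxv x = branch"
proof -
  have xV: "x \<in> V" using x dep_comp_verts_subset by blast
  show ?thesis
  proof (cases "(branch, x) \<in> E\<^sup>*")
    case False
    then show ?thesis
      using anchor_off_branch[OF secv_in_V maxv_in_V xV x(2)] dep_comp_verts_anchor[OF secv_in_V xV] x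
      unfolding branch_def by auto
  next
    case True
    then show ?thesis
      using anchor_past_branch[OF secv_in_V maxv_in_V xV] dep_comp_verts_anchor[OF secv_in_V xV] x
        branch_notin_dep_comp_verts_secv unfolding branch_def by auto
  qed
qed

abbreviation "Wc \<equiv> V - dep_comp_verts secv"
abbreviation "Tc \<equiv> restrict_tree T secv Wc"

lemma parent_closed_W2: "parent_closed secv Wc"
  using parent_closed_compl[OF secv_in_V] maxv_notin_dep_comp_verts_secv maxv_in_V by blast

lemma maxv_in_W2: "maxv \<in> Wc"
  using maxv_in_V maxv_notin_dep_comp_verts_secv by simp

lemma pi_tree_Tc: "pi_tree Tc r P"
  using pi_tree_if_pi_inc_tree pi_inc_tree_restrict[OF secv_in_V parent_closed_W2]
    union_of_blocks_Diff[OF union_of_blocks_V union_of_blocks_dep_comp_verts] by blast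

lemma Max_W2: "Max Wc = maxv"
  using maxv_in_W2 le_maxv finite_V by (intro Max_eqI) auto

lemma chain_Tc: "chain Tc maxv = Cmax \<inter> Wc"
proof -
  interpret Tc: increasing_tree Tc using pi_tree_Tc unfolding pi_tree_def by blast
  show ?thesis
    using Tc.chain_eq_ancestors ancestors_restrict[OF secv_in_V parent_closed_W2 maxv_in_W2]
      chain_eq_ancestors[OF maxv_in_V] maxv_in_W2 restrict_tree_verts by simp
qed

lemma anchor_Tc:
  assumes x: "x \<in> Wc" "x \<notin> Cmax" shows "anchor Tc maxv x = anchor T maxv x"
proof -
  let ?S = "Cmax \<inter> ancestors T x"
  have "anchor Tc maxv x = Max (?S \<inter> Wc)"
    unfolding anchor_def chain_Tc ancestors_restrict[OF secv_in_V parent_closed_W2 x(1)]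
    by (simp add: Int_ac)
  also have "\<dots> = Max ?S"
  proof (rule Max_eqI)
    show "finite (?S \<inter> Wc)" using finite_chain by simp
    show "Max ?S \<in> ?S \<inter> Wc"
      using anchor_maxv_compl[OF x] anchor_in_chain[OF maxv_in_V] anchor_rtrancl[OF maxv_in_V] x
      unfolding anchor_def ancestors_def by auto
    show "y \<le> Max ?S" if "y \<in> ?S \<inter> Wc" for y using that finite_chain by simp
  qed
  finally show ?thesis unfolding anchor_def .
qed

lemma dep_edges_collapse:
  assumes e: "(B,X) \<in> dep_edges P T maxv"
  defines "f \<equiv> \<lambda>B. if B \<in> dep_comp secv then Bbranch else B"
  shows "f B = f X \<or> (f B, f X) \<in> dep_edges P Tc maxv"
proof -
  interpret Tc: pi_tree Tc r P by (rule pi_tree_Tc)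
  have h: "B \<in> blocks_in P V" "Max B \<notin> Cmax" "X = blk P (anchor T maxv (Max B))"
    using e dep_edges_iff[OF maxv_in_V] by auto
  have aV: "anchor T maxv (Max B) \<in> V"
    using anchor_in_chain[OF maxv_in_V Max_block_in_set[OF h(1)]] chain_subset_V by blast
  have Bbranch: "Bbranch \<notin> dep_comp secv"
    using dep_comp_verts_iff[OF branch_in_V] branch_notin_dep_comp_verts_secv by simp
  show ?thesis
  proof (cases "B \<in> dep_comp secv")
    case True
    then have "Max B \<in> dep_comp_verts secv"
      using blocks_in_dep_comp_verts Max_block_in_set by blast
    then have "anchor T maxv (Max B) \<in> dep_comp_verts secv \<or> anchor T maxv (Max B) = branch"
      using anchor_maxv_dep_comp h(2) by blast
    then have "X \<in> dep_comp secv \<or> X = Bbranch"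
      by (elim disjE) (simp_all add: h(3) dep_comp_verts_iff[OF aV])
    then show ?thesis using True Bbranch unfolding f_def by auto
  next
    case False
    then have B2: "B \<in> blocks_in P Wc"
      using block_subset_side[of B "dep_comp_verts secv" V] h(1) union_of_blocks_dep_comp_verts
        blocks_in_dep_comp_verts dep_comp_verts_subset unfolding blocks_in_def
      by (metis (no_types, lifting) Un_absorb1 mem_Collect_eq)
    then have M2: "Max B \<in> Wc" using Max_block_in_set by blast
    then have "anchor T maxv (Max B) \<in> Wc" using anchor_maxv_compl h(2) by blast
    then have "X \<notin> dep_comp secv" using dep_comp_verts_iff[OF aV] h(3) by simp
    moreover have "(B,X) \<in> dep_edges P Tc maxv"
      using Tc.dep_edges_iff[of maxv] maxv_in_W2 B2 chain_Tc h anchor_Tc[OF M2 h(2)]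
      unfolding restrict_tree_verts by simp
    ultimately show ?thesis using False unfolding f_def by simp
  qed
qed

lemma dep_connected_Tc: "dep_connected P Tc maxv"
  unfolding dep_connected_def
proof (intro ballI)
  let ?f = "\<lambda>B. if B \<in> dep_comp secv then Bbranch else B"
  fix B1 B2 assume B: "B1 \<in> blocks_in P (verts Tc)" "B2 \<in> blocks_in P (verts Tc)"
  then have "B1 \<in> blocks_in P V" "B2 \<in> blocks_in P V" unfolding restrict_tree_verts blocks_in_def by auto
  then have "(B1,B2) \<in> (symcl (dep_edges P T maxv))\<^sup>*" using connected unfolding dep_connected_def by blast
  then have "(?f B1, ?f B2) \<in> (symcl (dep_edges P Tc maxv))\<^sup>*"
    by (rule rtrancl_symcl_map) (rule dep_edges_collapse)
  moreover have "B1 \<notin> dep_comp secv" "B2 \<notin> dep_comp secv"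
    using B blocks_in_disjoint[of Wc "dep_comp_verts secv"] blocks_in_dep_comp_verts
    unfolding restrict_tree_verts by auto
  ultimately show "(B1,B2) \<in> (symcl (dep_edges P Tc maxv))\<^sup>*" by simp
qed

lemma Max_splice_secv:
  assumes sp: "splice_at P T secv T1 T2 t" and M: "maxv \<in> verts T2"
  shows "Max (verts T1) = secv"
proof (rule Max_eqI)
  interpret T2: pi_tree T2 r P using pi_tree_if_pi_inc_tree splice_atD(2)[OF sp] by blast
  have "Bmax \<subseteq> verts T2" using T2.blk_in_blocks_V[OF M] blocks_in_subset by blast
  then have "verts T1 \<subseteq> V - Bmax" using splice_atD(3)[OF sp] splice_at_verts[OF sp] by blast
  then show "x \<le> secv" if "x \<in> verts T1" for x using that le_secv by blast
  show "finite (verts T1)" using splice_at_verts[OF sp] finite_V by (simp add: finite_subset)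
  show "secv \<in> verts T1" using splice_atD(4)[OF sp] .
qed

lemma irreducible_splice:
  "\<exists>!(T1,T2,t). splice_at P T secv T1 T2 t \<and> maxv \<in> verts T2
      \<and> irreducible_tree P T1 \<and> irreducible_tree P T2"
proof -
  obtain T1 T2' t where can: "canonical_splice secv = (T1,T2',t)" by (cases "canonical_splice secv") auto
  have T2': "T2' = Tc" using can unfolding canonical_splice_def by simp
  have "dep_comp_verts secv \<noteq> V" using maxv_in_W2 by blast
  then have "splice_at P T secv T1 T2' t" "dep_connected P T1 secv"
    using splice_at_canonical[OF secv_in_V _ can] by auto
  moreover have "maxv \<in> verts T2'" "Max (verts T2') = maxv"
    using maxv_in_W2 Max_W2 T2' restrict_tree_verts by simp_all
  ultimately have "splice_at P T secv T1 T2' t \<and> maxv \<in> verts T2'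
      \<and> irreducible_tree P T1 \<and> irreducible_tree P T2'"
    using Max_splice_secv dep_connected_Tc T2' splice_atD(1,2) unfolding irreducible_tree_def by simp
  moreover have "(T1',T2'',t') = (T1,T2',t)"
    if h: "splice_at P T secv T1' T2'' t' \<and> maxv \<in> verts T2'' \<and> irreducible_tree P T1'
      \<and> irreducible_tree P T2''" for T1' T2'' t'
  proof -
    have "Max (verts T1') = secv" using Max_splice_secv h by blast
    then have "dep_connected P T1' secv" using h unfolding irreducible_tree_def by simp
    then show ?thesis using splice_unique[OF conjunct1[OF h]] can by simp
  qed
  ultimately show ?thesis by (rule ex1_tripleI)
qed

end

theorem lemma3p10:
  fixes r :: nat and P :: "nat set set" and T :: tree
  assumes std: "std_partition r P"
    and T: "pi_inc_tree P T"
    and two: "card (blocks_in P (verts T)) \<ge> 2"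
  defines "M \<equiv> Max (verts T)"
    and "m \<equiv> Max (verts T - blk P (Max (verts T)))"
  shows
    "(reducible_tree P T \<longrightarrow>
        (\<exists>!(T1,T2,t). pi_inc_tree P T1 \<and> pi_inc_tree P T2
            \<and> verts T1 \<inter> verts T2 = {} \<and> M \<in> verts T1 \<and> t \<in> verts T2 \<and> t < M
            \<and> irreducible_tree P T1 \<and> T = spl T1 M T2 t)
      \<and> (\<forall>T1 T2 t. pi_inc_tree P T1 \<and> pi_inc_tree P T2
            \<and> verts T1 \<inter> verts T2 = {} \<and> M \<in> verts T1 \<and> t \<in> verts T2 \<and> t < M
            \<and> irreducible_tree P T1 \<and> T = spl T1 M T2 t
            \<longrightarrow> 1 \<in> verts T \<longrightarrow> 1 \<in> verts T2))
   \<and> (irreducible_tree P T \<longrightarrow>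
        (\<exists>!(T1,T2,t). pi_inc_tree P T1 \<and> pi_inc_tree P T2
            \<and> verts T1 \<inter> verts T2 = {} \<and> m \<in> verts T1 \<and> t \<in> verts T2 \<and> M \<in> verts T2
            \<and> t < m \<and> irreducible_tree P T1 \<and> irreducible_tree P T2
            \<and> T = spl T1 m T2 t))"
proof -
  interpret pi_tree_two_blocks T r P
    using std T two standard_partition.pi_tree_if_pi_inc_tree
    by (simp add: pi_tree_two_blocks_def pi_tree_two_blocks_axioms_def standard_partition_def)
  have Mm: "M = maxv" "m = secv" unfolding M_def m_def maxv_def secv_def by simp_all
  have a: "reducible_tree P T \<longrightarrow>
      (\<exists>!(T1,T2,t). splice_at P T maxv T1 T2 t \<and> irreducible_tree P T1)
      \<and> (\<forall>T1 T2 t. splice_at P T maxv T1 T2 t \<and> irreducible_tree P T1 \<longrightarrow> 1 \<in> V \<longrightarrow> 1 \<in> verts T2)"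
    using reducible_splice reducible_splice_one unfolding reducible_tree_def maxv_def by blast
  have b: "irreducible_tree P T \<longrightarrow> (\<exists>!(T1,T2,t). splice_at P T secv T1 T2 t \<and> maxv \<in> verts T2
      \<and> irreducible_tree P T1 \<and> irreducible_tree P T2)"
  proof
    assume "irreducible_tree P T"
    then interpret irreducible_pi_tree T r P
      by unfold_locales (simp add: irreducible_tree_def maxv_def)
    show "\<exists>!(T1,T2,t). splice_at P T secv T1 T2 t \<and> maxv \<in> verts T2
      \<and> irreducible_tree P T1 \<and> irreducible_tree P T2" by (rule irreducible_splice)
  qed
  show ?thesis using a b unfolding Mm splice_at_def by (simp add: conj_ac)
qed

end
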